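(* Let $(V,b)$ be an alternating bilinear $K[u]$-module, not necessarily non-degenerate, and let $d>0$. The following are equivalent: (i) $b(X^{d-1}v,v)\ne0$ for some $v\in V$ with $X^dv=0$; (ii) $d$ is even and $V=W\perp W'$ for some $K[u]$-submodules $W,W'$ with $(W,b)\cong V(d)$; (iii) $d$ is even and for every decomposition $V=W_1\perp\cdots\perp W_t$ into orthogonally indecomposable $K[u]$-submodules, some $(W_i,b)$ is isomorphic to $V(d)$.
   Context: $K$ is algebraically closed of characteristic 2, $u$ a generator of a cyclic $2$-group, $X=u-1$. A bilinear $K[u]$-module is a $K[u]$-module with a $u$-invariant bilinear form; $V=W\perp W'$ means $V=W\oplus W'$ with $b(W,W')=0$. A bilinear module is orthogonally indecomposable if it is nonzero and admits no such decomposition with both summands nonzero. For $d=2m$ even, $V(d)$ is $V_d$ (the $d$-dimensional indecomposable $K[u]$-module) with basis $e_1,\dots,e_d$ such that $ue_1=e_1$, $ue_i=e_i+\cdots+e_1$ for $2\le i\le m+1$, $ue_i=e_i+e_{i-1}$ for $m+1<i\le d$, and form $b(e_i,e_j)=1$ if $i+j=d+1$, $0$ otherwise. *)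

theory Defs
  imports "HOL-Analysis.Analysis" "HOL-Computational_Algebra.Polynomial"
begin

text \<open>Setting: the ambient space is 'k^'n; the group generator u acts by the matrix U,
  the bilinear form is b(x,y) = x^T B y. The K[u]-module V is a U-invariant subspace.\<close>

definition bil :: "'k::field^'n^'n \<Rightarrow> 'k^'n \<Rightarrow> 'k^'n \<Rightarrow> 'k" where
  "bil B x y = (\<Sum>i\<in>UNIV. x $ i * (B *v y) $ i)"

definition Xpow :: "'k::field^'n^'n \<Rightarrow> nat \<Rightarrow> 'k^'n \<Rightarrow> 'k^'n" where
  "Xpow U d = ((\<lambda>w. U *v w - w) ^^ d)"

definition submod :: "'k::field^'n^'n \<Rightarrow> ('k^'n) set \<Rightarrow> bool" where
  "submod U W \<longleftrightarrow> vec.subspace W \<and> (\<forall>w\<in>W. U *v w \<in> W)"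

definition perp2 :: "'k::field^'n^'n \<Rightarrow> 'k^'n^'n \<Rightarrow> ('k^'n) set \<Rightarrow> ('k^'n) set \<Rightarrow> ('k^'n) set \<Rightarrow> bool" where
  "perp2 U B V W W' \<longleftrightarrow> submod U W \<and> submod U W' \<and> W \<inter> W' = {0}
     \<and> {w + w' | w w'. w \<in> W \<and> w' \<in> W'} = V
     \<and> (\<forall>w\<in>W. \<forall>w'\<in>W'. bil B w w' = 0)"

definition orth_indec :: "'k::field^'n^'n \<Rightarrow> 'k^'n^'n \<Rightarrow> ('k^'n) set \<Rightarrow> bool" where
  "orth_indec U B W \<longleftrightarrow> W \<noteq> {0} \<and>
     \<not> (\<exists>A C. perp2 U B W A C \<and> A \<noteq> {0} \<and> C \<noteq> {0})"

definition perp_fam :: "'k::field^'n^'n \<Rightarrow> 'k^'n^'n \<Rightarrow> ('k^'n) set \<Rightarrow> nat \<Rightarrow> (nat \<Rightarrow> ('k^'n) set) \<Rightarrow> bool" where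
  "perp_fam U B V t Ws \<longleftrightarrow>
     (\<forall>i<t. submod U (Ws i) \<and> Ws i \<subseteq> V)
   \<and> (\<forall>i<t. \<forall>j<t. i \<noteq> j \<longrightarrow> (\<forall>x\<in>Ws i. \<forall>y\<in>Ws j. bil B x y = 0))
   \<and> (\<forall>v\<in>V. \<exists>!w. (\<forall>i<t. w i \<in> Ws i) \<and> (\<forall>i. t \<le> i \<longrightarrow> w i = 0) \<and> v = (\<Sum>i<t. w i))"

text \<open>(W, b) is isomorphic to V(d) (d = 2m): W has a basis e_1,...,e_d on which u and b
  act exactly as on the standard basis of V(d).\<close>
definition isVd :: "'k::field^'n^'n \<Rightarrow> 'k^'n^'n \<Rightarrow> ('k^'n) set \<Rightarrow> nat \<Rightarrow> bool" where
  "isVd U B W d \<longleftrightarrow> (\<exists>e :: nat \<Rightarrow> 'k^'n.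
     inj_on e {1..d} \<and> vec.independent (e ` {1..d}) \<and> vec.span (e ` {1..d}) = W
     \<and> U *v e 1 = e 1
     \<and> (\<forall>i. 2 \<le> i \<and> i \<le> d div 2 + 1 \<longrightarrow> U *v e i = (\<Sum>j=1..i. e j))
     \<and> (\<forall>i. d div 2 + 1 < i \<and> i \<le> d \<longrightarrow> U *v e i = e i + e (i - 1))
     \<and> (\<forall>i\<in>{1..d}. \<forall>j\<in>{1..d}. bil B (e i) (e j) = (if i + j = d + 1 then 1 else 0)))"

end

theory Submission
  imports Defs
begin

text \<open>In characteristic 2 the alternating form is symmetric, and \<open>u\<close> is an isometry of
  \<open>V\<close> whose inverse is \<open>u\<^sup>N\<^sup>-\<^sup>1\<close>. Hence every Gram entry \<open>b(X\<^sup>p u\<^sup>-\<^sup>r f, X\<^sup>p\<^sup>' u\<^sup>-\<^sup>r\<^sup>' f)\<close> is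
  a value \<open>\<psi>(i, l) = b(f, X\<^sup>i u\<^sup>-\<^sup>l f)\<close>; these satisfy
  \<open>\<psi>(i, l + 1) = \<psi>(i, l) + \<psi>(i + 1, l + 1)\<close>, \<open>\<psi>(i, l) = \<psi>(i, i - l)\<close> and
  \<open>\<psi>(2a, a) = b(z, z) = 0\<close> for \<open>z = X\<^sup>a u\<^sup>-\<^sup>a f\<close>. For a witness \<open>v\<close> of (i),
  \<open>\<psi>(d - 1, l) = b(X\<^sup>d\<^sup>-\<^sup>1 v, v) \<noteq> 0\<close> for all \<open>l\<close>, so \<open>d = 2m\<close> is even. Solving quadratic
  equations (\<open>K\<close> is algebraically closed) one replaces \<open>v\<close> by
  \<open>f = \<alpha> v + \<Sum>\<^sub>l \<beta>\<^sub>l X\<^sup>2\<^sup>l\<^sup>+\<^sup>1 u\<^sup>-\<^sup>l v\<close> with \<open>\<psi>(2a + 1, a) = \<delta>\<^sub>a\<^sub>,\<^sub>m\<^sub>-\<^sub>1\<close>. The vectors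
  \<open>X\<^sup>2\<^sup>m\<^sup>-\<^sup>i u\<^sup>-\<^sup>(\<^sup>m\<^sup>+\<^sup>1\<^sup>-\<^sup>i\<^sup>) f\<close> (\<open>i \<le> m\<close>) and \<open>X\<^sup>2\<^sup>m\<^sup>-\<^sup>i f\<close> (\<open>i > m\<close>) then span a copy
  of \<open>V(2m)\<close> with antidiagonal Gram matrix, which splits off as an orthogonal summand.
  Conversely the last basis vector of \<open>V(d)\<close> is a witness of (i). For (iii),
  \<open>b(X\<^sup>d\<^sup>-\<^sup>1 v, v)\<close> is the sum of the corresponding values for the components of \<open>v\<close>
  in an orthogonal decomposition, so some component is a witness inside its
  indecomposable summand, which therefore is \<open>V(d)\<close>; decompositions into
  indecomposables exist by induction on the dimension.\<close>

section \<open>The operators \<open>u\<close> and \<open>X\<close>\<close>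

lemma bil_add_left: "bil B (x + y) z = bil B x z + bil B y z"
  by (simp add: bil_def sum.distrib distrib_right)

lemma bil_add_right: "bil B x (y + z) = bil B x y + bil B x z"
  by (simp add: bil_def matrix_vector_right_distrib sum.distrib distrib_left)

lemma bil_diff_left: "bil B (x - y) z = bil B x z - bil B y z"
  by (simp add: bil_def sum_subtractf left_diff_distrib)

lemma bil_diff_right: "bil B x (y - z) = bil B x y - bil B x z"
  by (simp add: bil_def matrix_vector_mult_diff_distrib sum_subtractf right_diff_distrib)

lemma bil_scale_left: "bil B (c *s x) y = c * bil B x y"
  by (simp add: bil_def sum_distrib_left mult.assoc)

lemma bil_scale_right: "bil B x (c *s y) = c * bil B x y"
  by (simp add: bil_def vector_scalar_commute sum_distrib_left mult.left_commute)

lemma bil_zero_left [simp]: "bil B 0 y = 0"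
  by (simp add: bil_def)

lemma bil_zero_right [simp]: "bil B x 0 = 0"
  by (simp add: bil_def)

lemma bil_sum_left: "bil B (\<Sum>i\<in>I. f i) y = (\<Sum>i\<in>I. bil B (f i) y)"
  by (induction I rule: infinite_finite_induct) (simp_all add: bil_add_left)

lemma bil_sum_right: "bil B x (\<Sum>i\<in>I. f i) = (\<Sum>i\<in>I. bil B x (f i))"
  by (induction I rule: infinite_finite_induct) (simp_all add: bil_add_right)

lemma vec_uminus_CHAR_2:
  assumes "CHAR('k::field) = 2"
  shows "- (x :: 'k^'n) = x"
  by (simp add: vec_eq_iff uminus_CHAR_2[OF assms])

lemma vec_minus_CHAR_2:
  assumes "CHAR('k::field) = 2"
  shows "(x :: 'k^'n) - y = x + y"
  by (metis diff_minus_eq_add vec_uminus_CHAR_2[OF assms])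

definition Upow :: "'k::field^'n^'n \<Rightarrow> nat \<Rightarrow> 'k^'n \<Rightarrow> 'k^'n" where
  "Upow U r = ((*v) U) ^^ r"

lemma Upow_0 [simp]: "Upow U 0 w = w"
  by (simp add: Upow_def)

lemma Upow_Suc: "Upow U (Suc r) w = U *v Upow U r w"
  by (simp add: Upow_def)

lemma Upow_Upow: "Upow U a (Upow U b w) = Upow U (a + b) w"
  by (simp add: Upow_def funpow_add)

lemma Upow_add: "Upow U r (x + y) = Upow U r x + Upow U r y"
  by (induction r) (simp_all add: Upow_Suc matrix_vector_right_distrib)

lemma Upow_scale: "Upow U r (c *s x) = c *s Upow U r x"
  by (induction r) (simp_all add: Upow_Suc vector_scalar_commute)

lemma Upow_zero [simp]: "Upow U r 0 = 0"
  by (induction r) (simp_all add: Upow_Suc)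

lemma Upow_sum: "Upow U r (\<Sum>i\<in>I. f i) = (\<Sum>i\<in>I. Upow U r (f i))"
  by (induction I rule: infinite_finite_induct) (simp_all add: Upow_add)

lemma Xpow_0 [simp]: "Xpow U 0 w = w"
  by (simp add: Xpow_def)

lemma Xpow_Suc: "Xpow U (Suc k) w = U *v Xpow U k w - Xpow U k w"
  by (simp add: Xpow_def)

lemma Xpow_Xpow: "Xpow U a (Xpow U b w) = Xpow U (a + b) w"
  by (simp add: Xpow_def funpow_add)

lemma Xpow_add: "Xpow U k (x + y) = Xpow U k x + Xpow U k y"
  by (induction k) (simp_all add: Xpow_Suc matrix_vector_right_distrib)

lemma Xpow_diff: "Xpow U k (x - y) = Xpow U k x - Xpow U k y"
  by (induction k) (simp_all add: Xpow_Suc matrix_vector_mult_diff_distrib)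

lemma Xpow_scale: "Xpow U k (c *s x) = c *s Xpow U k x"
  by (induction k) (simp_all add: Xpow_Suc vector_scalar_commute vector_ssub_ldistrib)

lemma Xpow_zero [simp]: "Xpow U k 0 = 0"
  by (induction k) (simp_all add: Xpow_Suc)

lemma Xpow_sum: "Xpow U k (\<Sum>i\<in>I. f i) = (\<Sum>i\<in>I. Xpow U k (f i))"
  by (induction I rule: infinite_finite_induct) (simp_all add: Xpow_add)

lemma U_Xpow: "U *v Xpow U k w = Xpow U k (U *v w)"
  by (induction k) (simp_all add: Xpow_Suc matrix_vector_mult_diff_distrib)

lemma Upow_Xpow: "Upow U r (Xpow U k w) = Xpow U k (Upow U r w)"
  by (induction r) (simp_all add: Upow_Suc U_Xpow)

lemma submod_Xpow:
  assumes "submod U W" "w \<in> W"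
  shows "Xpow U k w \<in> W"
  using assms by (induction k) (auto simp: Xpow_Suc submod_def vec.subspace_diff)

lemma Xpow_span_subset:
  assumes "\<And>l. l \<in> A \<Longrightarrow> Xpow U 1 (e l) \<in> vec.span (e ` A')"
    and "s \<in> vec.span (e ` A)"
  shows "Xpow U 1 s \<in> vec.span (e ` A')"
proof -
  have "vec.subspace {x. Xpow U 1 x \<in> vec.span (e ` A')}"
    unfolding vec.subspace_def
    by (auto simp: Xpow_add Xpow_scale vec.span_add vec.span_scale vec.span_zero)
  then show ?thesis
    using vec.span_induct[OF assms(2), of "\<lambda>x. Xpow U 1 x \<in> vec.span (e ` A')"] assms(1)
    by auto
qed

definition XU :: "'k::field^'n^'n \<Rightarrow> nat \<Rightarrow> nat \<Rightarrow> 'k^'n \<Rightarrow> 'k^'n" where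
  "XU U p r w = Xpow U p (Upow U r w)"

lemma XU_add: "XU U p r (x + y) = XU U p r x + XU U p r y"
  by (simp add: XU_def Upow_add Xpow_add)

lemma XU_scale: "XU U p r (c *s x) = c *s XU U p r x"
  by (simp add: XU_def Upow_scale Xpow_scale)

lemma XU_sum: "XU U p r (\<Sum>i\<in>I. f i) = (\<Sum>i\<in>I. XU U p r (f i))"
  by (simp add: XU_def Upow_sum Xpow_sum)

lemma XU_XU: "XU U p r (XU U p' r' w) = XU U (p + p') (r + r') w"
  by (simp add: XU_def Upow_Xpow Xpow_Xpow Upow_Upow add.commute)

lemma Xpow_XU: "Xpow U k (XU U p r w) = XU U (k + p) r w"
  by (simp add: XU_def Xpow_Xpow)

section \<open>Orthogonal decompositions\<close>

lemma perp2_subset: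
  assumes "perp2 U B W A C"
  shows "A \<subseteq> W" "C \<subseteq> W"
proof -
  have "0 \<in> A" "0 \<in> C" "{a + c | a c. a \<in> A \<and> c \<in> C} = W"
    using assms vec.subspace_0 unfolding perp2_def submod_def by blast+
  then show "A \<subseteq> W" "C \<subseteq> W" by force+
qed

lemma perp_famI:
  assumes sub: "\<And>i. i < t \<Longrightarrow> submod U (Ws i) \<and> Ws i \<subseteq> V"
    and orth: "\<And>i j x y. i < t \<Longrightarrow> j < t \<Longrightarrow> i \<noteq> j \<Longrightarrow> x \<in> Ws i \<Longrightarrow> y \<in> Ws j \<Longrightarrow> bil B x y = 0"
    and spans: "\<And>v. v \<in> V \<Longrightarrow> \<exists>w. (\<forall>i<t. w i \<in> Ws i) \<and> v = (\<Sum>i<t. w i)"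
    and indep: "\<And>w. \<forall>i<t. w i \<in> Ws i \<Longrightarrow> (\<Sum>i<t. w i) = 0 \<Longrightarrow> \<forall>i<t. w i = 0"
  shows "perp_fam U B V t Ws"
  unfolding perp_fam_def
proof (intro conjI allI impI ballI)
  fix v assume "v \<in> V"
  then obtain w where w: "\<forall>i<t. w i \<in> Ws i" "v = (\<Sum>i<t. w i)"
    using spans by blast
  let ?P = "\<lambda>w. (\<forall>i<t. w i \<in> Ws i) \<and> (\<forall>i. t \<le> i \<longrightarrow> w i = 0) \<and> v = (\<Sum>i<t. w i)"
  show "\<exists>!w. ?P w"
  proof
    show "?P (\<lambda>i. if i < t then w i else 0)"
      using w by simp
  next
    fix w' assume w': "?P w'"
    have "\<forall>i<t. w' i - w i \<in> Ws i"
      using w w' sub vec.subspace_diff unfolding submod_def by blast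
    moreover have "(\<Sum>i<t. w' i - w i) = 0"
      using w w' by (simp add: sum_subtractf)
    ultimately have "\<forall>i<t. w' i = w i"
      using indep by fastforce
    then show "w' = (\<lambda>i. if i < t then w i else 0)"
      using w' by (auto simp: fun_eq_iff)
  qed
qed (use sub orth in auto)

lemma perp_famD:
  assumes "perp_fam U B V t Ws"
  shows perp_fam_submod: "i < t \<Longrightarrow> submod U (Ws i)"
    and perp_fam_subset: "i < t \<Longrightarrow> Ws i \<subseteq> V"
    and perp_fam_orth: "i < t \<Longrightarrow> j < t \<Longrightarrow> i \<noteq> j \<Longrightarrow> x \<in> Ws i \<Longrightarrow> y \<in> Ws j \<Longrightarrow> bil B x y = 0"
    and perp_fam_unique: "v \<in> V \<Longrightarrow>
      \<exists>!w. (\<forall>i<t. w i \<in> Ws i) \<and> (\<forall>i. t \<le> i \<longrightarrow> w i = 0) \<and> v = (\<Sum>i<t. w i)"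
proof -
  note fam = assms[unfolded perp_fam_def]
  show "i < t \<Longrightarrow> submod U (Ws i)" "i < t \<Longrightarrow> Ws i \<subseteq> V"
    using conjunct1[OF fam] by blast+
  show "i < t \<Longrightarrow> j < t \<Longrightarrow> i \<noteq> j \<Longrightarrow> x \<in> Ws i \<Longrightarrow> y \<in> Ws j \<Longrightarrow> bil B x y = 0"
    using conjunct1[OF conjunct2[OF fam]] by blast
  show "v \<in> V \<Longrightarrow> \<exists>!w. (\<forall>i<t. w i \<in> Ws i) \<and> (\<forall>i. t \<le> i \<longrightarrow> w i = 0) \<and> v = (\<Sum>i<t. w i)"
    by (rule bspec[OF conjunct2[OF conjunct2[OF fam]]])
qed

lemma perp_fam_decompose:
  assumes "perp_fam U B V t Ws" "v \<in> V"
  obtains w where "\<forall>i<t. w i \<in> Ws i" "v = (\<Sum>i<t. w i)"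
  using perp_fam_unique[OF assms] by blast

lemma perp_fam_components_eq_0:
  assumes fam: "perp_fam U B V t Ws" and w: "\<forall>i<t. w i \<in> Ws i" "(\<Sum>i<t. w i) = 0"
    and i: "i < t"
  shows "w i = 0"
proof -
  have zero: "0 \<in> Ws j" if "j < t" for j
    using perp_fam_submod[OF fam that] vec.subspace_0 unfolding submod_def by blast
  let ?P = "\<lambda>w. (\<forall>i<t. w i \<in> Ws i) \<and> (\<forall>i. t \<le> i \<longrightarrow> w i = 0) \<and> 0 = (\<Sum>i<t. w i)"
  have "0 \<in> V"
    using perp_fam_subset[OF fam i] zero[OF i] by blast
  then have ex1: "\<exists>!w. ?P w"
    by (rule perp_fam_unique[OF fam])
  have "?P (\<lambda>j. if j < t then w j else 0)"
    using w by simp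
  then have "(THE w. ?P w) = (\<lambda>j. if j < t then w j else 0)"
    by (rule the1_equality[OF ex1])
  moreover have "(THE w. ?P w) = (\<lambda>_. 0)"
    by (rule the1_equality[OF ex1]) (simp add: zero)
  ultimately have "(\<lambda>j. if j < t then w j else 0) = (\<lambda>_. 0)"
    by simp
  then show ?thesis
    using i by (metis (mono_tags))
qed

lemma perp_fam_trivial: "perp_fam U B {0} 0 Ws"
  by (rule perp_famI) auto

lemma perp_fam_single:
  assumes "submod U W"
  shows "perp_fam U B W 1 (\<lambda>_. W)"
proof (rule perp_famI)
  show "\<exists>w. (\<forall>i<1::nat. w i \<in> W) \<and> v = (\<Sum>i<1. w i)" if "v \<in> W" for v
    using that by (intro exI[of _ "\<lambda>_. v"]) (simp add: lessThan_Suc)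
qed (use assms in auto)

lemma sum_lessThan_add_split:
  "(\<Sum>i<a + b. f i) = (\<Sum>i<a. f i) + (\<Sum>i<b. f (a + i))"
  for f :: "nat \<Rightarrow> 'a::comm_monoid_add"
  by (induction b) (simp_all add: add.assoc)


lemma perp2_add_eq_0:
  assumes AC: "perp2 U B W A C" and "a \<in> A" "c \<in> C" "a + c = 0"
  shows "a = 0" "c = 0"
proof -
  have "vec.subspace C" "A \<inter> C = {0}"
    using AC unfolding perp2_def submod_def by blast+
  moreover have "a = - c"
    using assms(4) by (simp add: eq_neg_iff_add_eq_0)
  moreover have "- c \<in> C"
    using vec.subspace_neg \<open>vec.subspace C\<close> assms(3) by blast
  ultimately have "a \<in> A \<inter> C"
    using assms(2) by (intro IntI) simp_all
  then show "a = 0" "c = 0"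
    using \<open>A \<inter> C = {0}\<close> \<open>a = - c\<close> by auto
qed

lemma perp_fam_sum_mem:
  assumes fam: "perp_fam U B V t Ws" and V: "vec.subspace V" and w: "\<forall>i<t. w i \<in> Ws i"
  shows "(\<Sum>i<t. w i) \<in> V"
  using w perp_fam_subset[OF fam] by (intro vec.subspace_sum[OF V]) auto

lemma perp_fam_append_orth:
  assumes AC: "perp2 U B W A C" and CA: "\<forall>x\<in>C. \<forall>y\<in>A. bil B x y = 0"
    and famA: "perp_fam U B A s As" and famC: "perp_fam U B C t Cs"
    and ij: "i < s + t" "j < s + t" "i \<noteq> j"
    and xy: "x \<in> (if i < s then As i else Cs (i - s))" "y \<in> (if j < s then As j else Cs (j - s))"
  shows "bil B x y = 0"
proof -
  have AC_orth: "\<forall>x\<in>A. \<forall>y\<in>C. bil B x y = 0"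
    using AC unfolding perp2_def by blast
  consider "i < s" "j < s" | "i < s" "\<not> j < s" | "\<not> i < s" "j < s" | "\<not> i < s" "\<not> j < s"
    by blast
  then show ?thesis
  proof cases
    case 1
    then show ?thesis
      using ij xy perp_fam_orth[OF famA] by simp
  next
    case 2
    then have "j - s < t"
      using ij by simp
    then show ?thesis
      using 2 ij xy AC_orth perp_fam_subset[OF famA, of i] perp_fam_subset[OF famC, of "j - s"] by auto
  next
    case 3
    then have "i - s < t"
      using ij by simp
    then show ?thesis
      using 3 ij xy CA perp_fam_subset[OF famA, of j] perp_fam_subset[OF famC, of "i - s"] by auto
  next
    case 4
    then show ?thesis
      using ij xy perp_fam_orth[OF famC, of "i - s" "j - s"] by auto
  qed
qed

lemma perp_fam_append_components_eq_0:
  assumes AC: "perp2 U B W A C" and famA: "perp_fam U B A s As" and famC: "perp_fam U B C t Cs"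
    and w: "\<forall>i<s + t. w i \<in> (if i < s then As i else Cs (i - s))" "(\<Sum>i<s + t. w i) = 0"
    and i: "i < s + t"
  shows "w i = 0"
proof -
  have A: "vec.subspace A" and C: "vec.subspace C"
    using AC unfolding perp2_def submod_def by blast+
  have wA: "\<forall>i<s. w i \<in> As i"
    using w(1) by (metis trans_less_add1)
  have wC: "\<forall>i<t. w (s + i) \<in> Cs i"
  proof (intro allI impI)
    fix i assume "i < t"
    then show "w (s + i) \<in> Cs i"
      using w(1)[rule_format, of "s + i"] by simp
  qed
  have "(\<Sum>i<s. w i) + (\<Sum>i<t. w (s + i)) = 0"
    using w(2) by (simp add: sum_lessThan_add_split)
  then have "(\<Sum>i<s. w i) = 0" "(\<Sum>i<t. w (s + i)) = 0"
    using perp2_add_eq_0[OF AC perp_fam_sum_mem[OF famA A wA] perp_fam_sum_mem[OF famC C wC]]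
    by simp_all
  then have wA0: "\<forall>i<s. w i = 0" and wC0: "\<forall>i<t. w (s + i) = 0"
    using perp_fam_components_eq_0[OF famA wA] perp_fam_components_eq_0[OF famC wC] by auto
  show ?thesis
  proof (cases "i < s")
    case True
    then show ?thesis
      using wA0 by simp
  next
    case False
    then show ?thesis
      using wC0[rule_format, of "i - s"] i by simp
  qed
qed

lemma perp_fam_append:
  assumes AC: "perp2 U B W A C" and CA: "\<forall>x\<in>C. \<forall>y\<in>A. bil B x y = 0"
    and famA: "perp_fam U B A s As" and famC: "perp_fam U B C t Cs"
  shows "perp_fam U B W (s + t) (\<lambda>i. if i < s then As i else Cs (i - s))"
    (is "perp_fam U B W _ ?Ws")
proof (rule perp_famI)
  have A: "A \<subseteq> W" and C: "C \<subseteq> W" and sums: "{a + c | a c. a \<in> A \<and> c \<in> C} = W"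
    using AC perp2_subset[OF AC] unfolding perp2_def by blast+
  show "submod U (?Ws i) \<and> ?Ws i \<subseteq> W" if "i < s + t" for i
  proof (cases "i < s")
    case True
    then show ?thesis
      using perp_fam_submod[OF famA True] perp_fam_subset[OF famA True] A by auto
  next
    case False
    then have "i - s < t"
      using that by simp
    then show ?thesis
      using False perp_fam_submod[OF famC] perp_fam_subset[OF famC] C by auto
  qed
  show "\<exists>w. (\<forall>i<s + t. w i \<in> ?Ws i) \<and> v = (\<Sum>i<s + t. w i)" if "v \<in> W" for v
  proof -
    obtain a c where ac: "a \<in> A" "c \<in> C" "v = a + c"
      using \<open>v \<in> W\<close> sums by blast
    obtain wa where wa: "\<forall>i<s. wa i \<in> As i" "a = (\<Sum>i<s. wa i)"
      by (rule perp_fam_decompose[OF famA ac(1)])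
    obtain wc where wc: "\<forall>i<t. wc i \<in> Cs i" "c = (\<Sum>i<t. wc i)"
      by (rule perp_fam_decompose[OF famC ac(2)])
    let ?w = "\<lambda>i. if i < s then wa i else wc (i - s)"
    have "\<forall>i<s + t. ?w i \<in> ?Ws i"
      using wa(1) wc(1) by (simp add: less_diff_conv2)
    moreover have "v = (\<Sum>i<s + t. ?w i)"
      using ac(3) wa(2) wc(2) by (simp add: sum_lessThan_add_split)
    ultimately show ?thesis
      by (intro exI[of _ ?w] conjI)
  qed
qed (use perp_fam_append_orth[OF AC CA famA famC] perp_fam_append_components_eq_0[OF AC famA famC] in auto)

lemma perp2_zero_right:
  assumes "perp2 U B W A {0}"
  shows "A = W"
  using assms unfolding perp2_def by auto

lemma perp2_dim_less:
  assumes AC: "perp2 U B W A C" and W: "vec.subspace W"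
  shows "C \<noteq> {0} \<Longrightarrow> vec.dim A < vec.dim W" and "A \<noteq> {0} \<Longrightarrow> vec.dim C < vec.dim W"
proof -
  have A: "vec.subspace A" "A \<subseteq> W" and C: "vec.subspace C" "C \<subseteq> W" and "A \<inter> C = {0}"
    using AC perp2_subset[OF AC] unfolding perp2_def submod_def by blast+
  then have "A \<noteq> W" if "C \<noteq> {0}"
    using that vec.subspace_0[OF C(1)] by blast
  moreover have "C \<noteq> W" if "A \<noteq> {0}"
    using that \<open>A \<inter> C = {0}\<close> vec.subspace_0[OF A(1)] A(2) by blast
  ultimately show "C \<noteq> {0} \<Longrightarrow> vec.dim A < vec.dim W" "A \<noteq> {0} \<Longrightarrow> vec.dim C < vec.dim W"
    using A C W by (auto intro!: vec.dim_psubset simp: vec.span_eq_iff[THEN iffD2] psubset_eq)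
qed

lemma perp_fam_bil_diag:
  assumes fam: "perp_fam U B V t Ws" and w: "\<forall>i<t. w i \<in> Ws i"
  shows "bil B (Xpow U k (\<Sum>i<t. w i)) (\<Sum>i<t. w i) = (\<Sum>i<t. bil B (Xpow U k (w i)) (w i))"
proof -
  have off_diag: "bil B (Xpow U k (w i)) (w j) = 0" if "i < t" "j < t" "j \<noteq> i" for i j
    using perp_fam_orth[OF fam that(1,2)] that w submod_Xpow[OF perp_fam_submod[OF fam that(1)]]
    by metis
  have "bil B (Xpow U k (\<Sum>i<t. w i)) (\<Sum>i<t. w i) = (\<Sum>j<t. \<Sum>i<t. bil B (Xpow U k (w i)) (w j))"
    by (simp add: Xpow_sum bil_sum_left bil_sum_right)
  also have "\<dots> = (\<Sum>i<t. \<Sum>j<t. bil B (Xpow U k (w i)) (w j))"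
    by (rule sum.swap)
  also have "\<dots> = (\<Sum>i<t. bil B (Xpow U k (w i)) (w i))"
    using off_diag by (intro sum.cong refl) (simp add: sum.remove[of "{..<t}" i for i])
  finally show ?thesis .
qed

section \<open>The bilinear module \<open>V(d)\<close>\<close>

definition Vd_action :: "'k::field^'n^'n \<Rightarrow> nat \<Rightarrow> (nat \<Rightarrow> 'k^'n) \<Rightarrow> bool" where
  "Vd_action U d e \<longleftrightarrow> U *v e 1 = e 1
     \<and> (\<forall>i. 2 \<le> i \<and> i \<le> d div 2 + 1 \<longrightarrow> U *v e i = (\<Sum>j=1..i. e j))
     \<and> (\<forall>i. d div 2 + 1 < i \<and> i \<le> d \<longrightarrow> U *v e i = e i + e (i - 1))"

definition Vd_gram :: "'k::field^'n^'n \<Rightarrow> nat \<Rightarrow> (nat \<Rightarrow> 'k^'n) \<Rightarrow> bool" where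
  "Vd_gram B d e \<longleftrightarrow>
     (\<forall>i\<in>{1..d}. \<forall>j\<in>{1..d}. bil B (e i) (e j) = (if i + j = d + 1 then 1 else 0))"

lemma isVd_iff:
  "isVd U B W d \<longleftrightarrow> (\<exists>e. inj_on e {1..d} \<and> vec.independent (e ` {1..d})
     \<and> vec.span (e ` {1..d}) = W \<and> Vd_action U d e \<and> Vd_gram B d e)"
  unfolding isVd_def Vd_action_def Vd_gram_def by blast

lemma isVd_nonzero:
  assumes "isVd U B W d" "d > 0"
  shows "W \<noteq> {0}"
proof -
  obtain e where ind: "vec.independent (e ` {1..d})" and sp: "vec.span (e ` {1..d}) = W"
    using assms(1) unfolding isVd_iff by blast
  have e1: "e 1 \<in> e ` {1..d}"
    using assms(2) by simp
  then have "e 1 \<noteq> 0"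
    using ind vec.dependent_zero by metis
  moreover have "e 1 \<in> W"
    using e1 sp vec.span_base by metis
  ultimately show ?thesis
    by blast
qed

lemma Vd_action_X_first:
  assumes "Vd_action U d e"
  shows "Xpow U 1 (e 1) = 0"
  using assms by (simp add: Vd_action_def Xpow_Suc)

lemma Vd_action_X_step:
  assumes act: "Vd_action U d e" and i: "2 \<le> i" "i \<le> d"
  shows "Xpow U 1 (e i) - e (i - 1) \<in> vec.span (e ` {1..<i - 1})"
proof (cases "i \<le> d div 2 + 1")
  case True
  have "{1..i} = insert i (insert (i - 1) {1..<i - 1})"
    "i \<notin> insert (i - 1) {1..<i - 1}" "i - 1 \<notin> {1..<i - 1}"
    using i by auto
  then have "(\<Sum>j=1..i. e j) = e i + e (i - 1) + (\<Sum>j\<in>{1..<i - 1}. e j)"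
    by (simp add: add.assoc)
  then have "Xpow U 1 (e i) - e (i - 1) = (\<Sum>j\<in>{1..<i - 1}. e j)"
    using act True i by (simp add: Vd_action_def Xpow_Suc)
  moreover have "(\<Sum>j\<in>{1..<i - 1}. e j) \<in> vec.span (e ` {1..<i - 1})"
    by (intro vec.span_sum vec.span_base imageI)
  ultimately show ?thesis
    by simp
next
  case False
  then show ?thesis
    using act i by (simp add: Vd_action_def Xpow_Suc vec.span_zero)
qed

lemma Vd_action_X_flag:
  assumes act: "Vd_action U d e" and j: "j \<le> d + 1" and s: "s \<in> vec.span (e ` {1..<j})"
  shows "Xpow U 1 s \<in> vec.span (e ` {1..<j - 1})"
proof (rule Xpow_span_subset[OF _ s])
  fix l assume l: "l \<in> {1..<j}"
  show "Xpow U 1 (e l) \<in> vec.span (e ` {1..<j - 1})"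
  proof (cases "l = 1")
    case True
    then show ?thesis
      using Vd_action_X_first[OF act] by (simp add: vec.span_zero)
  next
    case False
    then have l': "2 \<le> l" "l \<le> d"
      using l j by auto
    have "l - 1 \<in> {1..<j - 1}"
      using l l' by auto
    then have "e (l - 1) \<in> vec.span (e ` {1..<j - 1})"
      by (intro vec.span_base imageI)
    moreover have "vec.span (e ` {1..<l - 1}) \<subseteq> vec.span (e ` {1..<j - 1})"
      using l by (intro vec.span_mono image_mono) auto
    then have "Xpow U 1 (e l) - e (l - 1) \<in> vec.span (e ` {1..<j - 1})"
      using Vd_action_X_step[OF act l'] by blast
    ultimately show ?thesis
      using vec.span_add by fastforce
  qed
qed

text \<open>\<open>X\<^sup>k e\<^sub>d \<equiv> e\<^sub>d\<^sub>-\<^sub>k\<close> modulo \<open>span {e\<^sub>1, \<dots>, e\<^sub>d\<^sub>-\<^sub>k\<^sub>-\<^sub>1}\<close>, because \<open>X\<close> moves this flag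
  one step down.\<close>

lemma Vd_action_Xpow_last:
  assumes act: "Vd_action U d e" and d: "d > 0"
  shows "Xpow U (d - 1) (e d) = e 1"
proof -
  have "Xpow U k (e d) - e (d - k) \<in> vec.span (e ` {1..<d - k})" if "k \<le> d - 1" for k
    using that
  proof (induction k)
    case 0
    then show ?case
      by (simp add: vec.span_zero)
  next
    case (Suc k)
    define s where "s = Xpow U k (e d) - e (d - k)"
    have "Xpow U (Suc k) (e d) - e (d - Suc k)
        = (Xpow U 1 (e (d - k)) - e (d - k - 1)) + Xpow U 1 s"
      by (simp add: s_def Xpow_Xpow Xpow_diff algebra_simps)
    moreover have "Xpow U 1 (e (d - k)) - e (d - k - 1) \<in> vec.span (e ` {1..<d - Suc k})"
      using Vd_action_X_step[OF act, of "d - k"] Suc.prems by simp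
    moreover have "Xpow U 1 s \<in> vec.span (e ` {1..<d - Suc k})"
      using Vd_action_X_flag[OF act, of "d - k" s] Suc by (simp add: s_def)
    ultimately show ?case
      by (metis vec.span_add)
  qed
  from this[of "d - 1"] show ?thesis
    using d by simp
qed

lemma isVd_witness:
  assumes "isVd U B W d" "d > 0"
  shows "\<exists>v\<in>W. Xpow U d v = 0 \<and> bil B (Xpow U (d - 1) v) v \<noteq> 0"
proof -
  obtain e where sp: "vec.span (e ` {1..d}) = W" and act: "Vd_action U d e" and g: "Vd_gram B d e"
    using assms(1) unfolding isVd_iff by blast
  have top: "Xpow U (d - 1) (e d) = e 1"
    by (rule Vd_action_Xpow_last[OF act assms(2)])
  have "Xpow U d (e d) = Xpow U 1 (Xpow U (d - 1) (e d))"
    using assms(2) by (simp add: Xpow_Xpow)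
  then have "Xpow U d (e d) = 0"
    using top Vd_action_X_first[OF act] by simp
  moreover have "bil B (Xpow U (d - 1) (e d)) (e d) = 1"
    using top g assms(2) by (auto simp: Vd_gram_def)
  moreover have "e d \<in> W"
    using sp assms(2) by (auto intro: vec.span_base)
  ultimately show ?thesis
    by auto
qed

lemma Vd_gram_coordinate:
  assumes g: "Vd_gram B d e" and j: "j \<in> {1..d}"
  shows "bil B (\<Sum>i\<in>{1..d}. c i *s e i) (e j) = c (d + 1 - j)"
proof -
  have "bil B (\<Sum>i\<in>{1..d}. c i *s e i) (e j) = (\<Sum>i\<in>{1..d}. c i * bil B (e i) (e j))"
    by (simp add: bil_sum_left bil_scale_left)
  also have "\<dots> = (\<Sum>i\<in>{1..d}. if i = d + 1 - j then c i else 0)"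
    by (rule sum.cong) (use g j in \<open>auto simp: Vd_gram_def\<close>)
  also have "\<dots> = c (d + 1 - j)"
    using j by (auto simp: sum.delta)
  finally show ?thesis .
qed

lemma Vd_gram_inj:
  assumes g: "Vd_gram B d e"
  shows "inj_on e {1..d}"
proof (rule inj_onI)
  fix i j assume i: "i \<in> {1..d}" and j: "j \<in> {1..d}" and eq: "e i = e j"
  have "d + 1 - i \<in> {1..d}"
    using i by auto
  then have "bil B (e i) (e (d + 1 - i)) = 1" "bil B (e j) (e (d + 1 - i)) = (if j = i then 1 else 0)"
    using g i j by (auto simp: Vd_gram_def)
  then show "i = j"
    using eq by (auto split: if_splits)
qed

lemma span_image_repr:
  assumes "inj_on e I" "finite I" "w \<in> vec.span (e ` I)"
  obtains c where "w = (\<Sum>i\<in>I. c i *s e i)"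
proof -
  obtain u where "w = (\<Sum>v\<in>e ` I. u v *s v)"
    using assms vec.span_finite[of "e ` I"] by auto
  then have "w = (\<Sum>i\<in>I. u (e i) *s e i)"
    using sum.reindex[OF assms(1)] by (simp add: comp_def)
  then show ?thesis
    by (rule that)
qed

lemma Vd_gram_independent:
  assumes g: "Vd_gram B d e"
  shows "vec.independent (e ` {1..d})"
  unfolding vec.independent_explicit
proof (intro conjI allI impI ballI)
  show "finite (e ` {1..d})"
    by simp
  fix c v assume h: "(\<Sum>v\<in>e ` {1..d}. c v *s v) = 0" and v: "v \<in> e ` {1..d}"
  then obtain i where i: "i \<in> {1..d}" and vi: "v = e i"
    by auto
  have "(\<Sum>v\<in>e ` {1..d}. c v *s v) = (\<Sum>i\<in>{1..d}. c (e i) *s e i)"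
    by (rule sum.reindex_cong[OF Vd_gram_inj[OF g]]) simp_all
  then have "(\<Sum>i\<in>{1..d}. c (e i) *s e i) = 0"
    using h by simp
  moreover have "d + 1 - i \<in> {1..d}"
    using i by auto
  ultimately show "c v = 0"
    using Vd_gram_coordinate[OF g, of "d + 1 - i" "\<lambda>i. c (e i)"] i vi by simp
qed

lemma Vd_action_submod:
  assumes act: "Vd_action U d e"
  shows "submod U (vec.span (e ` {1..d}))"
proof -
  let ?W = "vec.span (e ` {1..d})"
  have e_W: "e i \<in> ?W" if "i \<in> {1..d}" for i
    using that by (simp add: vec.span_base)
  have "U *v e i \<in> ?W" if i: "i \<in> {1..d}" for i
  proof -
    consider "i = 1" | "2 \<le> i" "i \<le> d div 2 + 1" | "d div 2 + 1 < i" "i \<le> d"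
      using i by fastforce
    then show ?thesis
    proof cases
      case 1
      then show ?thesis
        using act e_W i by (simp add: Vd_action_def)
    next
      case 2
      then have "(\<Sum>j=1..i. e j) \<in> ?W"
        by (intro vec.span_sum e_W) auto
      then show ?thesis
        using act 2 by (simp add: Vd_action_def)
    next
      case 3
      then have "e i + e (i - 1) \<in> ?W"
        by (intro vec.span_add e_W) auto
      then show ?thesis
        using act 3 by (simp add: Vd_action_def)
    qed
  qed
  then have "U *v x \<in> ?W" if "x \<in> e ` {1..d}" for x
    using that by blast
  moreover have "vec.subspace {x. U *v x \<in> ?W}"
    by (rule vec.subspace_linear_preimage[OF vec.subspace_span])
  ultimately have "U *v w \<in> ?W" if "w \<in> ?W" for w
    using vec.span_induct[OF that, of "\<lambda>x. U *v x \<in> ?W"] by blast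
  then show ?thesis
    by (simp add: submod_def vec.subspace_span)
qed

lemma bil_span_left_eq_0:
  assumes "y \<in> vec.span S" "\<And>z. z \<in> S \<Longrightarrow> bil B z x = 0"
  shows "bil B y x = 0"
proof -
  have "vec.subspace {y. bil B y x = 0}"
    unfolding vec.subspace_def by (auto simp: bil_add_left bil_scale_left)
  then show ?thesis
    using vec.span_induct[OF assms(1), of "\<lambda>y. bil B y x = 0"] assms(2) by blast
qed

section \<open>Normalizing coefficients\<close>

lemma CHAR_2_two:
  assumes "CHAR('k::field) = 2"
  shows "(2::'k) = 0"
  using of_nat_CHAR[where 'a='k] assms by simp

lemma quadratic_root_exists:
  fixes a b c :: "'k::alg_closed_field"
  assumes "b \<noteq> 0"
  shows "\<exists>x. a + b * x + c * x * x = 0"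
proof -
  have "0 < degree [:a, b, c:]"
    using assms le_degree[of "[:a, b, c:]" 1] by simp
  then obtain x where "poly [:a, b, c:] x = 0"
    using alg_closed_imp_poly_has_root by blast
  then show ?thesis
    by (auto simp: algebra_simps)
qed

text \<open>If \<open>c j\<close> is the value of \<open>b(v, X\<^sup>2\<^sup>j\<^sup>+\<^sup>1 u\<^sup>-\<^sup>j v)\<close>, then
  \<open>normalizing_value c m \<alpha> \<beta> j\<close> is the same value for
  \<open>\<alpha> v + \<Sum>\<^sub>l \<beta>\<^sub>l X\<^sup>2\<^sup>l\<^sup>+\<^sup>1 u\<^sup>-\<^sup>l v\<close>.\<close>

definition normalizing_value :: "(nat \<Rightarrow> 'k::field) \<Rightarrow> nat \<Rightarrow> 'k \<Rightarrow> (nat \<Rightarrow> 'k) \<Rightarrow> nat \<Rightarrow> 'k" where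
  "normalizing_value c m \<alpha> \<beta> j = \<alpha> * \<alpha> * c j + \<alpha> * (\<Sum>l<m. \<beta> l * c (j + l + 1))
     + (\<Sum>i<m. \<Sum>l<m. \<beta> i * \<beta> l * c (i + j + l + 1))"

lemma sum_fun_upd_add:
  fixes g :: "nat \<Rightarrow> 'k::comm_ring"
  assumes "t < m"
  shows "(\<Sum>l<m. (\<beta>(t := \<beta> t + \<delta>)) l * g l) = (\<Sum>l<m. \<beta> l * g l) + \<delta> * g t"
proof -
  have "(\<Sum>l<m. (\<beta>(t := \<beta> t + \<delta>)) l * g l) = (\<Sum>l<m. \<beta> l * g l + (if l = t then \<delta> * g l else 0))"
    by (rule sum.cong) (auto simp: algebra_simps)
  then show ?thesis
    using assms by (simp add: sum.distrib)
qed

text \<open>Changing \<open>\<beta>\<^sub>t\<close> by \<open>\<delta>\<close> produces two equal cross terms, which cancel in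
  characteristic 2.\<close>

lemma normalizing_value_update:
  fixes c :: "nat \<Rightarrow> 'k::field"
  assumes ch: "CHAR('k) = 2" and t: "t < m"
  shows "normalizing_value c m \<alpha> (\<beta>(t := \<beta> t + \<delta>)) j
    = normalizing_value c m \<alpha> \<beta> j + \<alpha> * \<delta> * c (j + t + 1) + \<delta> * \<delta> * c (2 * t + j + 1)"
proof -
  define \<beta>' where "\<beta>' = \<beta>(t := \<beta> t + \<delta>)"
  define S where "S \<gamma> i = (\<Sum>l<m. \<gamma> l * c (i + j + l + 1))" for \<gamma> i
  have double: "(\<Sum>i<m. \<Sum>l<m. \<gamma> i * \<gamma> l * c (i + j + l + 1)) = (\<Sum>i<m. \<gamma> i * S \<gamma> i)" for \<gamma>
    by (simp add: S_def sum_distrib_left mult.assoc)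
  have inner: "S \<beta>' i = S \<beta> i + \<delta> * c (i + j + t + 1)" for i
    unfolding S_def \<beta>'_def by (rule sum_fun_upd_add[OF t])
  have outer: "(\<Sum>i<m. \<beta>' i * S \<beta> i) = (\<Sum>i<m. \<beta> i * S \<beta> i) + \<delta> * S \<beta> t"
    unfolding \<beta>'_def by (rule sum_fun_upd_add[OF t])
  have diag: "(\<Sum>i<m. \<beta>' i * c (i + j + t + 1)) = (\<Sum>i<m. \<beta> i * c (i + j + t + 1)) + \<delta> * c (t + j + t + 1)"
    unfolding \<beta>'_def by (rule sum_fun_upd_add[OF t])
  have cross: "S \<beta> t = (\<Sum>i<m. \<beta> i * c (i + j + t + 1))"
    by (simp add: S_def add.commute add.left_commute)
  have "(\<Sum>i<m. \<beta>' i * S \<beta>' i) = (\<Sum>i<m. \<beta>' i * S \<beta> i) + \<delta> * (\<Sum>i<m. \<beta>' i * c (i + j + t + 1))"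
    by (simp add: inner distrib_left sum.distrib sum_distrib_left mult.left_commute)
  also have "\<dots> = (\<Sum>i<m. \<beta> i * S \<beta> i) + (\<delta> * S \<beta> t + \<delta> * S \<beta> t) + \<delta> * \<delta> * c (t + j + t + 1)"
    unfolding outer diag cross by (simp add: distrib_left add.assoc mult.assoc)
  also have "\<delta> * S \<beta> t + \<delta> * S \<beta> t = 0"
    using CHAR_2_two[OF ch] by (simp flip: mult_2)
  also have "t + j + t + 1 = 2 * t + j + 1"
    by simp
  finally have "(\<Sum>i<m. \<beta>' i * S \<beta>' i) = (\<Sum>i<m. \<beta> i * S \<beta> i) + \<delta> * \<delta> * c (2 * t + j + 1)"
    by simp
  moreover have "(\<Sum>l<m. \<beta>' l * c (j + l + 1)) = (\<Sum>l<m. \<beta> l * c (j + l + 1)) + \<delta> * c (j + t + 1)"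
    unfolding \<beta>'_def by (rule sum_fun_upd_add[OF t])
  ultimately show ?thesis
    unfolding normalizing_value_def double \<beta>'_def[symmetric] by (simp add: algebra_simps)
qed

text \<open>Changing \<open>\<beta>\<^sub>t\<close> fixes the value at \<open>j = m - t - 2\<close> by solving a quadratic equation
  whose linear coefficient is \<open>\<alpha> c (m - 1) \<noteq> 0\<close>, and does not disturb the values at larger \<open>j\<close>.\<close>

lemma normalizing_coefficients_step:
  fixes c :: "nat \<Rightarrow> 'k::alg_closed_field"
  assumes ch: "CHAR('k) = 2" and cz: "\<And>k. m \<le> k \<Longrightarrow> c k = 0"
    and \<alpha>: "\<alpha> * c (m - 1) \<noteq> 0" and t: "t + 2 \<le> m"
    and \<beta>: "\<forall>j<m. m \<le> j + t + 1 \<longrightarrow> normalizing_value c m \<alpha> \<beta> j = (if j = m - 1 then 1 else 0)"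
  shows "\<exists>\<beta>'. \<forall>j<m. m \<le> j + t + 2 \<longrightarrow> normalizing_value c m \<alpha> \<beta>' j = (if j = m - 1 then 1 else 0)"
proof -
  define j0 where "j0 = m - t - 2"
  have "j0 + t + 1 = m - 1"
    using t unfolding j0_def by arith
  then have "\<alpha> * c (j0 + t + 1) \<noteq> 0"
    using \<alpha> by simp
  then obtain \<delta> where \<delta>: "normalizing_value c m \<alpha> \<beta> j0 + \<alpha> * c (j0 + t + 1) * \<delta>
      + c (2 * t + j0 + 1) * \<delta> * \<delta> = 0"
    using quadratic_root_exists by blast
  define \<beta>' where "\<beta>' = \<beta>(t := \<beta> t + \<delta>)"
  have upd: "normalizing_value c m \<alpha> \<beta>' j = normalizing_value c m \<alpha> \<beta> j
      + \<alpha> * \<delta> * c (j + t + 1) + \<delta> * \<delta> * c (2 * t + j + 1)" for j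
    unfolding \<beta>'_def using t by (intro normalizing_value_update[OF ch]) simp
  have "normalizing_value c m \<alpha> \<beta>' j = (if j = m - 1 then 1 else 0)"
    if j: "j < m" "m \<le> j + t + 2" for j
  proof (cases "m \<le> j + t + 1")
    case True
    then show ?thesis
      using upd[of j] \<beta> j cz[of "j + t + 1"] cz[of "2 * t + j + 1"] by simp
  next
    case False
    then have "j = j0" "j0 \<noteq> m - 1"
      using j t by (auto simp: j0_def)
    then show ?thesis
      using upd[of j] \<delta> by (simp add: algebra_simps)
  qed
  then show ?thesis
    by blast
qed

lemma normalizing_coefficients_exist:
  fixes c :: "nat \<Rightarrow> 'k::alg_closed_field"
  assumes ch: "CHAR('k) = 2" and m: "m \<ge> 1" and cm: "c (m - 1) \<noteq> 0"
    and cz: "\<And>k. m \<le> k \<Longrightarrow> c k = 0"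
  shows "\<exists>\<alpha> \<beta>. \<forall>j<m. normalizing_value c m \<alpha> \<beta> j = (if j = m - 1 then 1 else 0)"
proof -
  obtain \<alpha> where "\<alpha> ^ 2 = inverse (c (m - 1))"
    using nth_root_exists[of 2] by auto
  then have \<alpha>: "\<alpha> * \<alpha> * c (m - 1) = 1"
    using cm by (simp add: power2_eq_square)
  let ?goal = "\<lambda>\<beta> j. normalizing_value c m \<alpha> \<beta> j = (if j = m - 1 then 1 else 0)"
  have "\<exists>\<beta>. \<forall>j<m. m \<le> j + t + 1 \<longrightarrow> ?goal \<beta> j" for t
  proof (induction t)
    case 0
    have "?goal (\<lambda>_. 0) j" if "j < m" "m \<le> j + 0 + 1" for j
      using that \<alpha> by (simp add: normalizing_value_def)
    then show ?case
      by blast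
  next
    case (Suc t)
    then obtain \<beta> where \<beta>: "\<forall>j<m. m \<le> j + t + 1 \<longrightarrow> ?goal \<beta> j"
      by blast
    show ?case
    proof (cases "t + 2 \<le> m")
      case True
      have "\<alpha> * c (m - 1) \<noteq> 0"
        using \<alpha> by auto
      then obtain \<beta>' where "\<forall>j<m. m \<le> j + t + 2 \<longrightarrow> ?goal \<beta>' j"
        using normalizing_coefficients_step[OF ch cz _ True \<beta>] by blast
      then show ?thesis
        by (intro exI[of _ \<beta>']) simp
    next
      case False
      then show ?thesis
        using \<beta> by (intro exI[of _ \<beta>]) auto
    qed
  qed
  from this[of "m - 1"] obtain \<beta> where "\<forall>j<m. ?goal \<beta> j"
    using m by auto
  then show ?thesis
    by blast
qed

section \<open>Alternating bilinear modules\<close>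

locale alt_bilinear_module =
  fixes U B :: "'k::field^'n^'n" and V :: "('k^'n) set" and N :: nat
  assumes CHAR_2: "CHAR('k) = 2"
    and submod_V: "submod U V"
    and period: "\<And>w. w \<in> V \<Longrightarrow> Upow U N w = w"
    and N_pos: "N > 0"
    and bil_U: "\<And>x y. x \<in> V \<Longrightarrow> y \<in> V \<Longrightarrow> bil B (U *v x) (U *v y) = bil B x y"
    and alternating: "\<And>v. v \<in> V \<Longrightarrow> bil B v v = 0"
begin

lemma subspace_V: "vec.subspace V"
  using submod_V by (simp add: submod_def)

lemma U_in_V: "w \<in> V \<Longrightarrow> U *v w \<in> V"
  using submod_V by (simp add: submod_def)

lemma zero_in_V: "0 \<in> V"
  using subspace_V vec.subspace_0 by blast

lemma add_in_V: "x \<in> V \<Longrightarrow> y \<in> V \<Longrightarrow> x + y \<in> V"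
  using subspace_V vec.subspace_add by blast

lemma diff_in_V: "x \<in> V \<Longrightarrow> y \<in> V \<Longrightarrow> x - y \<in> V"
  using subspace_V vec.subspace_diff by blast

lemma scale_in_V: "x \<in> V \<Longrightarrow> c *s x \<in> V"
  using subspace_V vec.subspace_scale by blast

lemma sum_in_V: "(\<And>i. i \<in> I \<Longrightarrow> f i \<in> V) \<Longrightarrow> (\<Sum>i\<in>I. f i) \<in> V"
  using subspace_V vec.subspace_sum by blast

lemma Upow_in_V: "w \<in> V \<Longrightarrow> Upow U r w \<in> V"
  by (induction r) (simp_all add: Upow_Suc U_in_V)

lemma Xpow_in_V: "w \<in> V \<Longrightarrow> Xpow U k w \<in> V"
  by (induction k) (simp_all add: Xpow_Suc U_in_V diff_in_V)

lemma XU_in_V: "w \<in> V \<Longrightarrow> XU U p r w \<in> V"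
  by (simp add: XU_def Upow_in_V Xpow_in_V)

lemma Upow_mod_period:
  assumes "w \<in> V"
  shows "Upow U (r + N * q) w = Upow U r w"
proof -
  have "Upow U (N * q) w = w"
  proof (induction q)
    case (Suc q)
    have "Upow U (N * Suc q) w = Upow U N (Upow U (N * q) w)"
      by (simp add: Upow_Upow)
    then show ?case
      using Suc period[OF assms] by simp
  qed simp
  then show ?thesis
    by (simp add: Upow_Upow[symmetric])
qed

lemma XU_mod_period: "w \<in> V \<Longrightarrow> XU U p (r + N * q) w = XU U p r w"
  by (simp add: XU_def Upow_mod_period)

lemma U_Uinv: "w \<in> V \<Longrightarrow> U *v Upow U (N - 1) w = w"
  using N_pos period by (metis Suc_diff_1 Upow_Suc)

lemma bil_Upow: "x \<in> V \<Longrightarrow> y \<in> V \<Longrightarrow> bil B (Upow U r x) (Upow U r y) = bil B x y"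
  by (induction r) (simp_all add: Upow_Suc bil_U Upow_in_V)

text \<open>On \<open>V\<close> the inverse of \<open>u\<close> is \<open>u\<^sup>N\<^sup>-\<^sup>1\<close>, so \<open>u\<^sup>-\<^sup>r\<close> is written \<open>Upow U ((N - 1) * r)\<close>.\<close>

lemma bil_Upow_adjoint:
  assumes "x \<in> V" "y \<in> V"
  shows "bil B (Upow U r x) y = bil B x (Upow U ((N - 1) * r) y)"
proof -
  have "r + (N - 1) * r = 0 + N * r"
    using N_pos by (cases N) simp_all
  then have "Upow U r (Upow U ((N - 1) * r) y) = y"
    using Upow_mod_period[OF assms(2), of 0 r] by (simp add: Upow_Upow)
  then show ?thesis
    using bil_Upow[OF assms(1) Upow_in_V[OF assms(2)], of r "(N - 1) * r"] by simp
qed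

lemma Uinv_eq:
  assumes "y \<in> V"
  shows "Upow U (N - 1) y = y + Xpow U 1 (Upow U (N - 1) y)"
proof -
  have "Xpow U 1 (Upow U (N - 1) y) = y - Upow U (N - 1) y"
    using U_Uinv[OF assms] by (simp add: Xpow_Suc)
  then show ?thesis
    by (metis add_diff_cancel_left' vec_minus_CHAR_2 CHAR_2 diff_add_cancel)
qed

lemma bil_X_adjoint:
  assumes "x \<in> V" "y \<in> V"
  shows "bil B (Xpow U 1 x) y = bil B x (Xpow U 1 (Upow U (N - 1) y))"
proof -
  have "bil B (Xpow U 1 x) y = bil B (U *v x) y - bil B x y"
    by (simp add: Xpow_Suc bil_diff_left)
  also have "bil B (U *v x) y = bil B x (Upow U (N - 1) y)"
    using bil_Upow_adjoint[OF assms, of 1] by (simp add: Upow_Suc)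
  also have "bil B x (Upow U (N - 1) y) - bil B x y = bil B x (Upow U (N - 1) y - y)"
    by (simp add: bil_diff_right)
  also have "Upow U (N - 1) y - y = Xpow U 1 (Upow U (N - 1) y)"
    using Uinv_eq[OF assms(2)] vec_minus_CHAR_2[OF CHAR_2] by (metis add_diff_cancel_left')
  finally show ?thesis .
qed

lemma bil_Xpow_adjoint:
  assumes "x \<in> V" "y \<in> V"
  shows "bil B (Xpow U p x) y = bil B x (Xpow U p (Upow U ((N - 1) * p) y))"
  using assms(1)
proof (induction p arbitrary: x)
  case 0
  then show ?case
    by simp
next
  case (Suc p)
  have "bil B (Xpow U (Suc p) x) y = bil B (Xpow U p (Xpow U 1 x)) y"
    by (simp add: Xpow_Xpow)
  also have "\<dots> = bil B (Xpow U 1 x) (Xpow U p (Upow U ((N - 1) * p) y))"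
    using Suc Xpow_in_V by blast
  also have "\<dots> = bil B x (Xpow U 1 (Upow U (N - 1) (Xpow U p (Upow U ((N - 1) * p) y))))"
    using bil_X_adjoint Suc.prems assms(2) Xpow_in_V Upow_in_V by blast
  also have "Xpow U 1 (Upow U (N - 1) (Xpow U p (Upow U ((N - 1) * p) y)))
      = Xpow U (Suc p) (Upow U ((N - 1) * Suc p) y)"
    by (simp add: Upow_Xpow Xpow_Xpow Upow_Upow add.commute)
  finally show ?case .
qed

lemma bil_XU_adjoint:
  assumes "x \<in> V" "y \<in> V"
  shows "bil B (XU U p r x) y = bil B x (XU U p ((N - 1) * (p + r)) y)"
proof -
  have "bil B (XU U p r x) y = bil B (Upow U r x) (Xpow U p (Upow U ((N - 1) * p) y))"
    unfolding XU_def using bil_Xpow_adjoint assms Upow_in_V by blast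
  also have "\<dots> = bil B x (Upow U ((N - 1) * r) (Xpow U p (Upow U ((N - 1) * p) y)))"
    using bil_Upow_adjoint assms Upow_in_V Xpow_in_V by blast
  also have "\<dots> = bil B x (XU U p ((N - 1) * (p + r)) y)"
    by (simp add: XU_def Upow_Xpow Upow_Upow distrib_left add.commute)
  finally show ?thesis .
qed

lemma bil_XU_XU:
  assumes "x \<in> V" "z \<in> V"
  shows "bil B (XU U p r x) (XU U p' r' z) = bil B x (XU U (p + p') ((N - 1) * (p + r) + r') z)"
  using bil_XU_adjoint[OF assms(1) XU_in_V[OF assms(2)]] by (simp add: XU_XU)

lemma bil_sym:
  assumes "x \<in> V" "y \<in> V"
  shows "bil B x y = bil B y x"
proof -
  have "0 = bil B (x + y) (x + y)"
    using alternating add_in_V assms by simp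
  also have "\<dots> = bil B x y + bil B y x"
    using alternating assms by (simp add: bil_add_left bil_add_right)
  finally have "bil B x y = - bil B y x"
    by (simp add: eq_neg_iff_add_eq_0)
  then show ?thesis
    by (simp add: uminus_CHAR_2[OF CHAR_2])
qed

text \<open>By \<open>bil_XU_XU\<close> and \<open>psi_mod_period\<close>, every entry of the Gram matrix of the
  vectors \<open>X\<^sup>p u\<^sup>r f\<close> is a value of \<open>psi f\<close>.\<close>

definition psi :: "'k^'n \<Rightarrow> nat \<Rightarrow> nat \<Rightarrow> 'k" where
  "psi f i l = bil B f (XU U i ((N - 1) * l) f)"

lemma psi_mod_period:
  assumes "f \<in> V" "e = (N - 1) * l + N * q"
  shows "bil B f (XU U i e f) = psi f i l"
  using assms XU_mod_period by (simp add: psi_def)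

lemma psi_Suc:
  assumes "f \<in> V"
  shows "psi f i (Suc l) = psi f i l + psi f (Suc i) (Suc l)"
proof -
  define y where "y = Upow U ((N - 1) * l) f"
  have yV: "y \<in> V"
    using assms by (simp add: y_def Upow_in_V)
  have "XU U i ((N - 1) * Suc l) f = Xpow U i (Upow U (N - 1) y)"
    by (simp add: XU_def y_def Upow_Upow add.commute)
  also have "\<dots> = Xpow U i y + Xpow U i (Xpow U 1 (Upow U (N - 1) y))"
    by (subst Uinv_eq[OF yV]) (simp add: Xpow_add)
  also have "\<dots> = XU U i ((N - 1) * l) f + XU U (Suc i) ((N - 1) * Suc l) f"
    by (simp add: XU_def y_def Xpow_Xpow Upow_Upow add.commute)
  finally show ?thesis
    by (simp add: psi_def bil_add_right)
qed

lemma psi_split: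
  assumes "f \<in> V"
  shows "psi f i l = psi f i (Suc l) + psi f (Suc i) (Suc l)"
proof -
  have "psi f i (Suc l) + psi f (Suc i) (Suc l)
      = psi f i l + (psi f (Suc i) (Suc l) + psi f (Suc i) (Suc l))"
    using psi_Suc[OF assms, of i l] by (simp add: add.assoc)
  then show ?thesis
    using minus_CHAR_2[OF CHAR_2, of "psi f (Suc i) (Suc l)" "psi f (Suc i) (Suc l)"] by simp
qed

lemma XU_nilpotent:
  assumes "Xpow U d f = 0" "d \<le> i"
  shows "XU U i e f = 0"
proof -
  have "XU U i e f = Upow U e (Xpow U (i - d) (Xpow U d f))"
    using assms(2) by (simp add: XU_def Upow_Xpow[symmetric] Xpow_Xpow)
  then show ?thesis
    using assms(1) by simp
qed

lemma psi_nilpotent: "Xpow U d f = 0 \<Longrightarrow> d \<le> i \<Longrightarrow> psi f i l = 0"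
  using XU_nilpotent by (simp add: psi_def)

lemma psi_double_diag:
  assumes "f \<in> V"
  shows "psi f (2 * a) a = 0"
proof -
  define z where "z = XU U a ((N - 1) * a) f"
  have exp: "(N - 1) * (a + (N - 1) * a) + (N - 1) * a = (N - 1) * a + N * ((N - 1) * a)"
    using N_pos by (cases N) (simp_all add: algebra_simps)
  have "0 = bil B z z"
    using alternating XU_in_V assms by (simp add: z_def)
  also have "\<dots> = bil B f (XU U (2 * a) ((N - 1) * (a + (N - 1) * a) + (N - 1) * a) f)"
    unfolding z_def using bil_XU_XU[OF assms assms] by (simp add: mult_2)
  also have "\<dots> = psi f (2 * a) a"
    by (rule psi_mod_period[OF assms exp])
  finally show ?thesis
    by simp
qed

lemma psi_reflect:
  assumes "f \<in> V" "l \<le> i"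
  shows "psi f i l = psi f i (i - l)"
proof -
  obtain j where j: "i = l + j"
    using assms(2) le_Suc_ex by blast
  have "(N - 1) * (i + (N - 1) * l) = (N - 1) * (i - l) + N * ((N - 1) * l)"
    using N_pos by (cases N) (simp_all add: algebra_simps j)
  then have "bil B f (XU U i ((N - 1) * (i + (N - 1) * l)) f) = psi f i (i - l)"
    by (rule psi_mod_period[OF assms(1)])
  moreover have "psi f i l = bil B (XU U i ((N - 1) * l) f) f"
    using bil_sym assms XU_in_V by (simp add: psi_def)
  ultimately show ?thesis
    using bil_XU_adjoint assms by simp
qed

lemma psi_top:
  assumes "w \<in> V" "Xpow U d w = 0" "d \<ge> 1"
  shows "psi w (d - 1) l = bil B (Xpow U (d - 1) w) w"
proof -
  have "Xpow U (d - 1) (Upow U ((N - 1) * l) w) = Xpow U (d - 1) w"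
  proof (induction l)
    case (Suc l)
    define w' where "w' = Upow U ((N - 1) * l) w"
    have "Xpow U (d - 1) (Upow U (N - 1) w')
        = Xpow U (d - 1) w' + Xpow U (d - 1) (Xpow U 1 (Upow U (N - 1) w'))"
      using assms(1) by (subst Uinv_eq) (simp_all add: w'_def Upow_in_V Xpow_add)
    also have "Xpow U (d - 1) (Xpow U 1 (Upow U (N - 1) w')) = Upow U (N - 1) (Xpow U d w')"
      using assms(3) by (simp add: Xpow_Xpow Upow_Xpow)
    also have "Xpow U d w' = 0"
      using assms(2) by (simp add: w'_def Upow_Xpow[symmetric])
    finally have "Xpow U (d - 1) (Upow U (N - 1) w') = Xpow U (d - 1) w'"
      by simp
    then show ?case
      using Suc by (simp add: w'_def Upow_Upow)
  qed simp
  then show ?thesis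
    using bil_sym[OF assms(1) Xpow_in_V[OF assms(1)]] by (simp add: psi_def XU_def)
qed

definition normalized :: "nat \<Rightarrow> 'k^'n \<Rightarrow> bool" where
  "normalized m f \<longleftrightarrow> f \<in> V \<and> Xpow U (2 * m) f = 0 \<and>
     (\<forall>a<m. psi f (2 * a + 1) a = (if a = m - 1 then 1 else 0))"

lemma normalized_psi_below:
  assumes nf: "normalized m f" and "a + j < m"
  shows "psi f (2 * a + j) a = 0"
  using assms(2)
proof (induction j arbitrary: a rule: less_induct)
  case (less j)
  have fV: "f \<in> V"
    using nf normalized_def by blast
  consider "j = 0" | "j = 1" | "j \<ge> 2"
    by linarith
  then show ?case
  proof cases
    case 1
    then show ?thesis
      using psi_double_diag[OF fV] by simp
  next
    case 2
    then show ?thesis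
      using nf less.prems by (simp add: normalized_def)
  next
    case 3
    define j' where "j' = j - 2"
    have j: "j = j' + 2"
      using 3 by (simp add: j'_def)
    have "psi f (2 * a + j) a = psi f (2 * Suc a + j') (Suc a) + psi f (2 * Suc a + Suc j') (Suc a)"
      using psi_split[OF fV, of "2 * a + j" a] j by simp
    also have "\<dots> = 0"
      using less.IH[of j' "Suc a"] less.IH[of "Suc j'" "Suc a"] less.prems j by simp
    finally show ?thesis .
  qed
qed

lemma normalized_psi_upper:
  assumes nf: "normalized m f" and "a < m" "a' < m"
  shows "psi f (a + a') a = 0"
proof (cases "a \<le> a'")
  case True
  then show ?thesis
    using normalized_psi_below[OF nf, of a "a' - a"] assms by (simp add: mult_2)
next
  case False
  have "f \<in> V"
    using nf normalized_def by blast
  then have "psi f (a + a') a = psi f (a + a') a'"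
    using psi_reflect[of f a "a + a'"] by simp
  also have "\<dots> = psi f (2 * a' + (a - a')) a'"
    using False by (simp add: mult_2 add.commute)
  also have "\<dots> = 0"
    using normalized_psi_below[OF nf, of a' "a - a'"] assms False by simp
  finally show ?thesis .
qed

lemma normalized_psi_mixed:
  assumes nf: "normalized m f" and m: "m \<ge> 1"
  shows "psi f (t + m - 1) t = (if t = m then 1 else 0)"
proof -
  have fV: "f \<in> V" and fX: "Xpow U (2 * m) f = 0"
    using nf normalized_def by blast+
  show ?thesis
  proof (cases "t \<le> m - 1")
    case True
    then have "psi f (t + m - 1) t = psi f (2 * t + (m - 1 - t)) t"
      using m by (simp add: mult_2)
    then show ?thesis
      using normalized_psi_below[OF nf, of t "m - 1 - t"] True m by simp
  next
    case False
    have "t + m - 1 = 2 * (m - 1) + (t - m + 1)"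
      using False m by simp
    moreover have "psi f (t + m - 1) t = psi f (t + m - 1) (m - 1)"
      using psi_reflect[OF fV, of t "t + m - 1"] m False by simp
    ultimately have "psi f (t + m - 1) t = psi f (2 * (m - 1) + (t - m + 1)) (m - 1)"
      by simp
    moreover have "psi f (2 * (m - 1)) (m - 1) = 0"
      by (rule psi_double_diag[OF fV])
    moreover have "psi f (2 * (m - 1) + 1) (m - 1) = 1"
      using nf m by (simp add: normalized_def)
    moreover have "psi f (2 * (m - 1) + (t - m + 1)) (m - 1) = 0" if "t - m + 1 \<ge> 2"
      using psi_nilpotent[OF fX] that m by simp
    ultimately show ?thesis
      using False by (cases "t = m") auto
  qed
qed

definition Vd_basis :: "nat \<Rightarrow> 'k^'n \<Rightarrow> nat \<Rightarrow> 'k^'n" where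
  "Vd_basis m f i =
    (if m + 1 \<le> i then XU U (2 * m - i) 0 f else XU U (2 * m - i) ((N - 1) * (m + 1 - i)) f)"

lemma Vd_basis_in_V: "f \<in> V \<Longrightarrow> Vd_basis m f i \<in> V"
  by (simp add: Vd_basis_def XU_in_V)

lemma Vd_basis_gram_mixed:
  assumes nf: "normalized m f" and m: "m \<ge> 1"
    and i: "m + 1 \<le> i" "i \<le> 2 * m" and j: "1 \<le> j" "j \<le> m"
  shows "bil B (Vd_basis m f i) (Vd_basis m f j) = (if i + j = 2 * m + 1 then 1 else 0)"
proof -
  have fV: "f \<in> V"
    using nf normalized_def by blast
  define a where "a = 2 * m - i"
  define k where "k = m + 1 - j"
  have "k + m - 1 = 2 * m - j"
    using i j by (simp add: k_def)
  then have "bil B (Vd_basis m f i) (Vd_basis m f j)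
      = bil B (XU U a 0 f) (XU U (k + m - 1) ((N - 1) * k) f)"
    using i j by (simp add: Vd_basis_def a_def k_def)
  also have "\<dots> = bil B f (XU U (a + (k + m - 1)) ((N - 1) * (a + k)) f)"
    using bil_XU_XU[OF fV fV] by (simp add: distrib_left)
  also have "\<dots> = psi f ((a + k) + m - 1) (a + k)"
    using i j by (simp add: psi_def a_def k_def)
  also have "\<dots> = (if a + k = m then 1 else 0)"
    by (rule normalized_psi_mixed[OF nf m])
  also have "(a + k = m) = (i + j = 2 * m + 1)"
    using i j unfolding a_def k_def by arith
  finally show ?thesis .
qed

lemma Vd_basis_gram_upper:
  assumes nf: "normalized m f" and "m + 1 \<le> i" "i \<le> 2 * m" "m + 1 \<le> j" "j \<le> 2 * m"
  shows "bil B (Vd_basis m f i) (Vd_basis m f j) = 0"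
proof -
  have fV: "f \<in> V"
    using nf normalized_def by blast
  have "bil B (Vd_basis m f i) (Vd_basis m f j) = psi f ((2 * m - i) + (2 * m - j)) (2 * m - i)"
    using assms bil_XU_XU[OF fV fV] by (simp add: Vd_basis_def psi_def)
  also have "\<dots> = 0"
    by (rule normalized_psi_upper[OF nf]) (use assms in simp)+
  finally show ?thesis .
qed

lemma Vd_basis_gram_lower:
  assumes nf: "normalized m f" and "1 \<le> i" "i \<le> m" "1 \<le> j" "j \<le> m"
  shows "bil B (Vd_basis m f i) (Vd_basis m f j) = 0"
proof -
  have fV: "f \<in> V" and fX: "Xpow U (2 * m) f = 0"
    using nf normalized_def by blast+
  define k where "k = m + 1 - i"
  define l where "l = m + 1 - j"
  have "bil B (Vd_basis m f i) (Vd_basis m f j)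
      = bil B (XU U (k + m - 1) ((N - 1) * k) f) (XU U (l + m - 1) ((N - 1) * l) f)"
    using assms by (simp add: Vd_basis_def k_def l_def mult_2)
  also have "\<dots> = bil B f (XU U ((k + m - 1) + (l + m - 1)) ((N - 1) * ((k + m - 1) + (N - 1) * k) + (N - 1) * l) f)"
    by (rule bil_XU_XU[OF fV fV])
  also have "\<dots> = 0"
    using XU_nilpotent[OF fX] assms by (simp add: k_def l_def)
  finally show ?thesis .
qed

lemma Vd_basis_gram:
  assumes nf: "normalized m f" and m: "m \<ge> 1"
  shows "Vd_gram B (2 * m) (Vd_basis m f)"
  unfolding Vd_gram_def
proof (intro ballI)
  fix i j assume i: "i \<in> {1..2 * m}" and j: "j \<in> {1..2 * m}"
  have sym: "bil B (Vd_basis m f j) (Vd_basis m f i) = bil B (Vd_basis m f i) (Vd_basis m f j)"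
    using bil_sym Vd_basis_in_V nf normalized_def by blast
  consider "m + 1 \<le> i" "m + 1 \<le> j" | "m + 1 \<le> i" "j \<le> m" | "i \<le> m" "m + 1 \<le> j" | "i \<le> m" "j \<le> m"
    by linarith
  then show "bil B (Vd_basis m f i) (Vd_basis m f j) = (if i + j = 2 * m + 1 then 1 else 0)"
  proof cases
    case 1
    then show ?thesis
      using Vd_basis_gram_upper[OF nf] i j by simp
  next
    case 2
    then show ?thesis
      using Vd_basis_gram_mixed[OF nf m] i j by simp
  next
    case 3
    then show ?thesis
      using Vd_basis_gram_mixed[OF nf m, of j i] sym i j by (simp add: add.commute)
  next
    case 4
    then show ?thesis
      using Vd_basis_gram_lower[OF nf] i j by simp
  qed
qed

lemma U_eq_add_X: "U *v w = w + Xpow U 1 w"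
  by (simp add: Xpow_Suc)

lemma U_XU_Uinv:
  assumes "w \<in> V"
  shows "U *v XU U 1 (N - 1) w = Xpow U 1 w"
  using U_Uinv[OF assms] by (simp add: XU_def U_Xpow)

lemma Vd_basis_Uinv:
  assumes m: "m \<ge> 1" and i: "2 \<le> i" "i \<le> m + 1"
  shows "XU U 1 (N - 1) (Vd_basis m f i) = Vd_basis m f (i - 1)"
proof (cases "i = m + 1")
  case True
  then show ?thesis
    using m by (simp add: Vd_basis_def XU_XU)
next
  case False
  then have "1 + (2 * m - i) = 2 * m - (i - 1)" "(N - 1) + (N - 1) * (m + 1 - i) = (N - 1) * (m + 1 - (i - 1))"
    "\<not> m + 1 \<le> i" "\<not> m + 1 \<le> i - 1"
    using i by (simp_all add: Suc_diff_le)
  then show ?thesis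
    by (simp add: Vd_basis_def XU_XU)
qed

lemma Xpow_Vd_basis:
  assumes nf: "normalized m f" and m: "m \<ge> 1" and i: "1 \<le> i" "i \<le> m + 1"
  shows "Xpow U 1 (Vd_basis m f i) = (\<Sum>j\<in>{1..<i}. Vd_basis m f j)"
  using i
proof (induction i rule: nat_induct_at_least)
  case base
  have "Xpow U (2 * m) f = 0"
    using nf normalized_def by blast
  then show ?case
    using m XU_nilpotent[of "2 * m" f "Suc (2 * m - 1)"] by (simp add: Vd_basis_def Xpow_XU)
next
  case (Suc i)
  have fV: "f \<in> V"
    using nf normalized_def by blast
  have "Xpow U 1 (Vd_basis m f (Suc i)) = U *v XU U 1 (N - 1) (Vd_basis m f (Suc i))"
    using U_XU_Uinv Vd_basis_in_V fV by simp
  also have "XU U 1 (N - 1) (Vd_basis m f (Suc i)) = Vd_basis m f i"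
    using Vd_basis_Uinv[OF m, of "Suc i"] Suc by simp
  also have "U *v Vd_basis m f i = Vd_basis m f i + (\<Sum>j\<in>{1..<i}. Vd_basis m f j)"
    using Suc by (simp add: U_eq_add_X)
  also have "\<dots> = (\<Sum>j\<in>{1..<Suc i}. Vd_basis m f j)"
    using Suc by (simp add: add.commute)
  finally show ?case .
qed

lemma Vd_basis_action:
  assumes nf: "normalized m f" and m: "m \<ge> 1"
  shows "Vd_action U (2 * m) (Vd_basis m f)"
  unfolding Vd_action_def
proof (intro conjI allI impI)
  show "U *v Vd_basis m f 1 = Vd_basis m f 1"
    using Xpow_Vd_basis[OF nf m, of 1] m by (simp add: U_eq_add_X)
  fix i
  assume i: "2 \<le> i \<and> i \<le> 2 * m div 2 + 1"
  then have "{1..i} = insert i {1..<i}"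
    by auto
  then show "U *v Vd_basis m f i = (\<Sum>j=1..i. Vd_basis m f j)"
    using Xpow_Vd_basis[OF nf m, of i] i by (simp add: U_eq_add_X add.commute)
next
  fix i
  assume i: "2 * m div 2 + 1 < i \<and> i \<le> 2 * m"
  then have "m + 1 \<le> i - 1" "1 + (2 * m - i) = 2 * m - (i - 1)"
    by auto
  then have "Xpow U 1 (Vd_basis m f i) = Vd_basis m f (i - 1)"
    using i by (simp add: Vd_basis_def Xpow_XU)
  then show "U *v Vd_basis m f i = Vd_basis m f i + Vd_basis m f (i - 1)"
    by (simp add: U_eq_add_X)
qed

lemma orth_complement_submod:
  assumes W: "W \<subseteq> V" "submod U W"
  shows "submod U {x \<in> V. \<forall>w\<in>W. bil B w x = 0}"
proof -
  have W_Upow: "Upow U r w \<in> W" if "w \<in> W" for w r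
    using that W(2) by (induction r) (simp_all add: Upow_Suc submod_def)
  have "bil B w (U *v x) = 0"
    if x: "x \<in> V" "\<forall>w\<in>W. bil B w x = 0" and w: "w \<in> W" for x w
  proof -
    have wV: "w \<in> V"
      using w W(1) by blast
    have "bil B w (U *v x) = bil B (U *v Upow U (N - 1) w) (U *v x)"
      using U_Uinv[OF wV] by simp
    also have "\<dots> = bil B (Upow U (N - 1) w) x"
      using bil_U Upow_in_V wV x(1) by blast
    also have "\<dots> = 0"
      using x(2) W_Upow w by blast
    finally show ?thesis .
  qed
  then show ?thesis
    unfolding submod_def vec.subspace_def
    by (auto simp: zero_in_V add_in_V scale_in_V U_in_V bil_add_right bil_scale_right)
qed

lemma Vd_gram_coordinate_right:
  assumes eV: "\<And>i. i \<in> {1..d} \<Longrightarrow> e i \<in> V" and g: "Vd_gram B d e" and j: "j \<in> {1..d}"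
  shows "bil B (e j) (\<Sum>i\<in>{1..d}. c i *s e i) = c (d + 1 - j)"
proof -
  have "(\<Sum>i\<in>{1..d}. c i *s e i) \<in> V"
    using eV by (intro sum_in_V scale_in_V) auto
  then show ?thesis
    using Vd_gram_coordinate[OF g j] bil_sym eV[OF j] by metis
qed

lemma Vd_gram_span_orth_eq_0:
  assumes eV: "\<And>i. i \<in> {1..d} \<Longrightarrow> e i \<in> V" and g: "Vd_gram B d e"
    and w: "w \<in> vec.span (e ` {1..d})" "\<forall>j\<in>{1..d}. bil B (e j) w = 0"
  shows "w = 0"
proof -
  obtain c where c: "w = (\<Sum>i\<in>{1..d}. c i *s e i)"
    using span_image_repr[OF Vd_gram_inj[OF g] _ w(1)] by blast
  have "c i = 0" if i: "i \<in> {1..d}" for i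
  proof -
    have "d + 1 - i \<in> {1..d}"
      using i by auto
    then show ?thesis
      using Vd_gram_coordinate_right[OF eV g, of "d + 1 - i" c] w(2) c i by simp
  qed
  then show ?thesis
    using c by simp
qed

lemma Vd_gram_orth_complement_splits:
  assumes eV: "\<And>i. i \<in> {1..d} \<Longrightarrow> e i \<in> V" and g: "Vd_gram B d e"
    and W: "submod U (vec.span (e ` {1..d}))"
  shows "perp2 U B V (vec.span (e ` {1..d})) {x \<in> V. \<forall>w\<in>vec.span (e ` {1..d}). bil B w x = 0}"
    (is "perp2 U B V ?W ?W'")
proof -
  have WV: "?W \<subseteq> V"
    using eV vec.span_minimal[OF _ subspace_V] by blast
  have e_W: "e i \<in> ?W" if "i \<in> {1..d}" for i
    using that by (simp add: vec.span_base)
  have "?W \<inter> ?W' = {0}"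
    using Vd_gram_span_orth_eq_0[OF eV g] e_W orth_complement_submod[OF WV W]
      vec.subspace_0[OF vec.subspace_span] vec.subspace_0
    unfolding submod_def by blast
  moreover have "x \<in> {w + w' | w w'. w \<in> ?W \<and> w' \<in> ?W'}" if xV: "x \<in> V" for x
  proof -
    define p where "p = (\<Sum>i\<in>{1..d}. bil B (e (d + 1 - i)) x *s e i)"
    have pW: "p \<in> ?W"
      unfolding p_def by (intro vec.span_sum vec.span_scale e_W) auto
    have "bil B (e j) (x - p) = 0" if "j \<in> {1..d}" for j
      using Vd_gram_coordinate_right[OF eV g that] that by (simp add: p_def bil_diff_right)
    then have "bil B y (x - p) = 0" if "y \<in> ?W" for y
      using bil_span_left_eq_0[OF that] by blast
    then have "x - p \<in> ?W'"
      using diff_in_V xV pW WV by blast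
    then show ?thesis
      using pW by force
  qed
  then have "{w + w' | w w'. w \<in> ?W \<and> w' \<in> ?W'} = V"
    using WV add_in_V by auto
  ultimately show ?thesis
    unfolding perp2_def using W orth_complement_submod[OF WV W] by blast
qed

lemma Vd_splits_off:
  assumes eV: "\<And>i. i \<in> {1..d} \<Longrightarrow> e i \<in> V" and act: "Vd_action U d e" and g: "Vd_gram B d e"
  shows "\<exists>W W'. perp2 U B V W W' \<and> isVd U B W d"
  using Vd_gram_orth_complement_splits[OF eV g Vd_action_submod[OF act]]
    Vd_gram_inj[OF g] Vd_gram_independent[OF g] act g
  unfolding isVd_iff by blast

lemma normalized_splits_off:
  assumes nf: "normalized m f" and m: "m \<ge> 1"
  shows "\<exists>W W'. perp2 U B V W W' \<and> isVd U B W (2 * m)"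
proof (rule Vd_splits_off)
  show "\<And>i. i \<in> {1..2 * m} \<Longrightarrow> Vd_basis m f i \<in> V"
    using Vd_basis_in_V nf normalized_def by blast
qed (use Vd_basis_action[OF nf m] Vd_basis_gram[OF nf m] in auto)

lemma witness_even:
  assumes "v \<in> V" "Xpow U d v = 0" "bil B (Xpow U (d - 1) v) v \<noteq> 0" "d > 0"
  shows "even d"
proof (rule ccontr)
  assume "odd d"
  then obtain k where k: "d = 2 * k + 1"
    using oddE by blast
  then have "psi v (d - 1) k = 0"
    using psi_double_diag assms(1) by simp
  then show False
    using psi_top assms by simp
qed

lemma bil_XU_odd_left:
  assumes v: "v \<in> V"
  shows "bil B (XU U (2 * i + 1) ((N - 1) * i) v) (XU U p ((N - 1) * q) v)
    = psi v (2 * i + 1 + p) (i + 1 + q)"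
proof -
  have exp: "(N - 1) * (2 * i + 1 + (N - 1) * i) + (N - 1) * q = (N - 1) * (i + 1 + q) + N * ((N - 1) * i)"
    using N_pos by (cases N) (simp_all add: algebra_simps)
  have "bil B (XU U (2 * i + 1) ((N - 1) * i) v) (XU U p ((N - 1) * q) v)
      = bil B v (XU U (2 * i + 1 + p) ((N - 1) * (2 * i + 1 + (N - 1) * i) + (N - 1) * q) v)"
    by (rule bil_XU_XU[OF v v])
  also have "\<dots> = psi v (2 * i + 1 + p) (i + 1 + q)"
    by (rule psi_mod_period[OF v exp])
  finally show ?thesis .
qed

lemma psi_even_pred:
  assumes v: "v \<in> V" and J: "J \<ge> 1"
  shows "psi v (2 * J) (J - 1) = psi v (2 * J + 1) J"
  using psi_Suc[OF v, of "2 * J" "J - 1"] psi_double_diag[OF v, of J] J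
  by (simp add: minus_CHAR_2[OF CHAR_2] eq_diff_eq[symmetric])

text \<open>With \<open>T\<^sub>j = X\<^sup>2\<^sup>j\<^sup>+\<^sup>1 u\<^sup>-\<^sup>j\<close> and \<open>c\<^sub>j = b(v, T\<^sub>j v)\<close> one has
  \<open>b(T\<^sub>i v, T\<^sub>j v) = 0\<close>, \<open>b(v, T\<^sub>j T\<^sub>l v) = c\<^sub>j\<^sub>+\<^sub>l\<^sub>+\<^sub>1\<close> and
  \<open>b(T\<^sub>i v, T\<^sub>j T\<^sub>l v) = c\<^sub>i\<^sub>+\<^sub>j\<^sub>+\<^sub>l\<^sub>+\<^sub>1\<close>; expanding bilinearly gives
  \<^const>\<open>normalizing_value\<close>.\<close>

lemma psi_normalizing_comb:
  assumes v: "v \<in> V"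
  shows "psi (\<alpha> *s v + (\<Sum>l<m. \<beta> l *s XU U (2 * l + 1) ((N - 1) * l) v)) (2 * a + 1) a
    = normalizing_value (\<lambda>j. psi v (2 * j + 1) j) m \<alpha> \<beta> a"
proof -
  define c where "c j = psi v (2 * j + 1) j" for j
  define g where "g l = XU U (2 * l + 1) ((N - 1) * l) v" for l
  define T where "T w = XU U (2 * a + 1) ((N - 1) * a) w" for w
  have C1: "bil B v (T v) = c a"
    by (simp add: T_def c_def psi_def)
  have C2: "bil B v (T (g l)) = c (a + l + 1)" for l
  proof -
    have "T (g l) = XU U (2 * (a + l + 1)) ((N - 1) * (a + l + 1 - 1)) v"
      by (simp add: T_def g_def XU_XU distrib_left)
    then show ?thesis
      using psi_even_pred[OF v, of "a + l + 1"] by (simp add: psi_def c_def)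
  qed
  have C3: "bil B (g i) (T v) = 0" for i
    using bil_XU_odd_left[OF v, of i "2 * a + 1" a] psi_double_diag[OF v, of "i + 1 + a"]
    by (simp add: g_def T_def algebra_simps)
  have C4: "bil B (g i) (T (g l)) = c (i + a + l + 1)" for i l
  proof -
    have "T (g l) = XU U (2 * a + 1 + (2 * l + 1)) ((N - 1) * (a + l)) v"
      by (simp add: T_def g_def XU_XU distrib_left)
    then show ?thesis
      using bil_XU_odd_left[OF v, of i "2 * a + 1 + (2 * l + 1)" "a + l"]
      by (simp add: g_def c_def algebra_simps)
  qed
  have "T (\<alpha> *s v + (\<Sum>l<m. \<beta> l *s g l)) = \<alpha> *s T v + (\<Sum>l<m. \<beta> l *s T (g l))"
    by (simp add: T_def XU_add XU_scale XU_sum)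
  then have "psi (\<alpha> *s v + (\<Sum>l<m. \<beta> l *s g l)) (2 * a + 1) a
      = bil B (\<alpha> *s v + (\<Sum>l<m. \<beta> l *s g l)) (\<alpha> *s T v + (\<Sum>l<m. \<beta> l *s T (g l)))"
    by (simp add: psi_def T_def)
  also have "\<dots> = normalizing_value c m \<alpha> \<beta> a"
    by (simp add: bil_add_left bil_add_right bil_scale_left bil_scale_right bil_sum_left
        bil_sum_right C1 C2 C3 C4 normalizing_value_def algebra_simps sum_distrib_left sum.distrib)
  finally show ?thesis
    by (simp only: g_def c_def[abs_def])
qed

lemma submod_alt_bilinear_module:
  assumes "submod U W" "W \<subseteq> V"
  shows "alt_bilinear_module U B W N"
  by unfold_locales (use assms in \<open>auto intro!: CHAR_2 period N_pos bil_U alternating\<close>)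

lemma orth_indec_decomposition_exists:
  assumes "submod U W" "W \<subseteq> V"
  shows "\<exists>t Ws. perp_fam U B W t Ws \<and> (\<forall>i<t. orth_indec U B (Ws i))"
  using assms
proof (induction "vec.dim W" arbitrary: W rule: less_induct)
  case less
  consider "W = {0}" | "orth_indec U B W" | A C where "perp2 U B W A C" "A \<noteq> {0}" "C \<noteq> {0}"
    unfolding orth_indec_def by blast
  then show ?case
  proof cases
    case 1
    then show ?thesis
      using perp_fam_trivial by blast
  next
    case 2
    then show ?thesis
      using perp_fam_single[OF less.prems(1)] by fastforce
  next
    case 3
    have W: "vec.subspace W"
      using less.prems(1) by (simp add: submod_def)
    have A: "submod U A" "A \<subseteq> V" and C: "submod U C" "C \<subseteq> V"
      using 3(1) perp2_subset[OF 3(1)] less.prems(2) unfolding perp2_def by auto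
    obtain s As where famA: "perp_fam U B A s As" and indA: "\<forall>i<s. orth_indec U B (As i)"
      using less.hyps[OF perp2_dim_less(1)[OF 3(1) W 3(3)] A] by blast
    obtain t Cs where famC: "perp_fam U B C t Cs" and indC: "\<forall>i<t. orth_indec U B (Cs i)"
      using less.hyps[OF perp2_dim_less(2)[OF 3(1) W 3(2)] C] by blast
    have "\<forall>x\<in>C. \<forall>y\<in>A. bil B x y = 0"
      using 3(1) A(2) C(2) bil_sym unfolding perp2_def by (metis subsetD)
    then have "perp_fam U B W (s + t) (\<lambda>i. if i < s then As i else Cs (i - s))"
      by (rule perp_fam_append[OF 3(1) _ famA famC])
    moreover have "\<forall>i<s + t. orth_indec U B (if i < s then As i else Cs (i - s))"
      using indA indC by (auto simp: less_diff_conv2)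
    ultimately show ?thesis
      by blast
  qed
qed

lemma Vd_in_decomposition_splits_off:
  assumes fam: "perp_fam U B V t Ws" and i: "i < t" and Vd: "isVd U B (Ws i) d"
  shows "\<exists>W W'. perp2 U B V W W' \<and> isVd U B W d"
proof -
  obtain e where sp: "vec.span (e ` {1..d}) = Ws i" and act: "Vd_action U d e" and g: "Vd_gram B d e"
    using Vd unfolding isVd_iff by blast
  have "e j \<in> V" if "j \<in> {1..d}" for j
    using that sp perp_fam_subset[OF fam i] vec.span_base[of "e j" "e ` {1..d}"] by blast
  then show ?thesis
    by (rule Vd_splits_off[OF _ act g])
qed

end

locale alt_bilinear_module_alg_closed = alt_bilinear_module U B V N
  for U B :: "'k::alg_closed_field^'n^'n" and V N
begin

lemma normalized_exists:
  assumes v: "v \<in> V" "Xpow U (2 * m) v = 0" and m: "m \<ge> 1"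
    and nz: "bil B (Xpow U (2 * m - 1) v) v \<noteq> 0"
  shows "\<exists>f. normalized m f"
proof -
  define c where "c j = psi v (2 * j + 1) j" for j
  have "2 * (m - 1) + 1 = 2 * m - 1"
    using m by simp
  then have "c (m - 1) = psi v (2 * m - 1) (m - 1)"
    by (simp only: c_def)
  then have "c (m - 1) \<noteq> 0"
    using psi_top[OF v] m nz by simp
  moreover have "c k = 0" if "m \<le> k" for k
    using psi_nilpotent[OF v(2)] that by (simp add: c_def)
  ultimately obtain \<alpha> \<beta> where \<alpha>\<beta>: "\<forall>j<m. normalizing_value c m \<alpha> \<beta> j = (if j = m - 1 then 1 else 0)"
    using normalizing_coefficients_exist[OF CHAR_2 m] by blast
  define f where "f = \<alpha> *s v + (\<Sum>l<m. \<beta> l *s XU U (2 * l + 1) ((N - 1) * l) v)"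
  have "f \<in> V"
    unfolding f_def using v by (intro add_in_V scale_in_V sum_in_V XU_in_V) auto
  moreover have "Xpow U (2 * m) (XU U p r v) = 0" for p r
    using XU_nilpotent[OF v(2), of "2 * m + p" r] by (simp add: Xpow_XU)
  then have "Xpow U (2 * m) f = 0"
    unfolding f_def by (simp add: Xpow_add Xpow_scale Xpow_sum v)
  moreover have "psi f (2 * a + 1) a = normalizing_value c m \<alpha> \<beta> a" for a
    unfolding f_def c_def[abs_def] by (rule psi_normalizing_comb[OF v(1)])
  ultimately have "normalized m f"
    using \<alpha>\<beta> by (simp add: normalized_def)
  then show ?thesis
    by blast
qed

lemma witness_splits_off_Vd:
  assumes v: "v \<in> V" "Xpow U d v = 0" "bil B (Xpow U (d - 1) v) v \<noteq> 0" and d: "d > 0"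
  shows "even d \<and> (\<exists>W W'. perp2 U B V W W' \<and> isVd U B W d)"
proof -
  obtain m where dm: "d = 2 * m"
    using witness_even[OF v d] by blast
  then have m: "m \<ge> 1"
    using d by simp
  obtain f where "normalized m f"
    using normalized_exists[OF v(1) _ m] v(2,3) dm by blast
  then show ?thesis
    using normalized_splits_off[OF _ m] dm by auto
qed

lemma Vd_summand_in_every_decomposition:
  assumes d: "d > 0" and WW': "perp2 U B V W W'" and Vd: "isVd U B W d"
    and fam: "perp_fam U B V t Ws" and indec: "\<forall>i<t. orth_indec U B (Ws i)"
  shows "\<exists>i<t. isVd U B (Ws i) d"
proof -
  obtain v where "v \<in> W" and vX: "Xpow U d v = 0" and nz: "bil B (Xpow U (d - 1) v) v \<noteq> 0"
    using isVd_witness[OF Vd d] by blast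
  then have "v \<in> V"
    using perp2_subset[OF WW'] by blast
  then obtain w where w: "\<forall>i<t. w i \<in> Ws i" and vw: "v = (\<Sum>i<t. w i)"
    by (rule perp_fam_decompose[OF fam])
  have wX: "Xpow U d (w i) = 0" if "i < t" for i
  proof (rule perp_fam_components_eq_0[OF fam _ _ that])
    show "\<forall>i<t. Xpow U d (w i) \<in> Ws i"
      using w submod_Xpow perp_fam_submod[OF fam] by blast
    show "(\<Sum>i<t. Xpow U d (w i)) = 0"
      using vX vw by (simp add: Xpow_sum)
  qed
  have "(\<Sum>i<t. bil B (Xpow U (d - 1) (w i)) (w i)) \<noteq> 0"
    using nz perp_fam_bil_diag[OF fam w] vw by simp
  then obtain i where i: "i < t" and nzi: "bil B (Xpow U (d - 1) (w i)) (w i) \<noteq> 0"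
    by (meson lessThan_iff sum.neutral)
  interpret Wi: alt_bilinear_module_alg_closed U B "Ws i" N
    using submod_alt_bilinear_module[OF perp_fam_submod[OF fam i] perp_fam_subset[OF fam i]]
    by (simp add: alt_bilinear_module_alg_closed_def)
  obtain A C where AC: "perp2 U B (Ws i) A C" and VdA: "isVd U B A d"
    using Wi.witness_splits_off_Vd[OF _ wX[OF i] nzi d] w i by blast
  then have "C = {0}"
    using indec i isVd_nonzero[OF VdA d] unfolding orth_indec_def by blast
  then show ?thesis
    using AC VdA i perp2_zero_right by blast
qed

end

theorem lemma6p6:
  fixes U B :: "'k::alg_closed_field^'n^'n" and V :: "('k^'n) set" and d \<alpha> :: nat
  assumes char2: "CHAR('k) = 2"
    and Vmod: "submod U V"
    and uorder: "\<forall>v\<in>V. (((*v) U) ^^ (2 ^ \<alpha>)) v = v"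
    and binv: "\<forall>x\<in>V. \<forall>y\<in>V. bil B (U *v x) (U *v y) = bil B x y"
    and balt: "\<forall>v\<in>V. bil B v v = 0"
    and dpos: "d > 0"
  shows "((\<exists>v\<in>V. Xpow U d v = 0 \<and> bil B (Xpow U (d - 1) v) v \<noteq> 0)
           \<longleftrightarrow> (even d \<and> (\<exists>W W'. perp2 U B V W W' \<and> isVd U B W d)))
       \<and> ((even d \<and> (\<exists>W W'. perp2 U B V W W' \<and> isVd U B W d))
           \<longleftrightarrow> (even d \<and> (\<forall>t Ws. perp_fam U B V t Ws \<and> (\<forall>i<t. orth_indec U B (Ws i))
                   \<longrightarrow> (\<exists>i<t. isVd U B (Ws i) d))))"
proof -
  interpret alt_bilinear_module_alg_closed U B V "2 ^ \<alpha>"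
    by unfold_locales (use assms in \<open>auto simp: Upow_def\<close>)
  let ?i = "\<exists>v\<in>V. Xpow U d v = 0 \<and> bil B (Xpow U (d - 1) v) v \<noteq> 0"
  let ?ii = "even d \<and> (\<exists>W W'. perp2 U B V W W' \<and> isVd U B W d)"
  let ?iii = "even d \<and> (\<forall>t Ws. perp_fam U B V t Ws \<and> (\<forall>i<t. orth_indec U B (Ws i))
                   \<longrightarrow> (\<exists>i<t. isVd U B (Ws i) d))"
  have "?i \<Longrightarrow> ?ii"
    using witness_splits_off_Vd dpos by blast
  moreover have "?ii \<Longrightarrow> ?i"
    using isVd_witness[OF _ dpos] perp2_subset by blast
  moreover have "?ii \<Longrightarrow> ?iii"
    using Vd_summand_in_every_decomposition[OF dpos] by blast
  moreover have "?ii" if iii: ?iii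
  proof -
    obtain t Ws where "perp_fam U B V t Ws" "\<forall>i<t. orth_indec U B (Ws i)"
      using orth_indec_decomposition_exists[OF Vmod order_refl] by blast
    then show ?ii
      using iii Vd_in_decomposition_splits_off by blast
  qed
  ultimately show ?thesis
    by blast
qed

end
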